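(* Let $(M,g)$ be a Riemannian manifold, $\lambda\in\mathbb{R}$, $X$ a smooth vector field satisfying $R_{ab}=\tfrac12X_aX_b-\nabla_{(a}X_{b)}+\lambda g_{ab}$, and $\Gamma>0$ any smooth function. Set $K_a=\Gamma X_a+\nabla_a\Gamma$, $F=\tfrac12|X|^2-\tfrac12\nabla_aX^a+\lambda$, and define $A$ by $F=\frac{A}{\Gamma}+\frac{|K|^2}{\Gamma^2}$. Then $$\nabla_aA+\frac{1}{2\Gamma}\Big(\nabla_a-\frac{K_a+\nabla_a\Gamma}{\Gamma}\Big)(K^b\nabla_b\Gamma)-\Big(\nabla^b-\frac{K^b}{\Gamma}\Big)\nabla_{(a}K_{b)}+\Big(\nabla_a+\frac{K_a-\nabla_a\Gamma}{2\Gamma}\Big)\nabla_cK^c=0.$$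
   Context: $\nabla$ is the Levi-Civita connection of $g$, $R_{ab}$ its Ricci tensor, $|\cdot|$ the $g$-norm. *)

theory Defs
  imports "HOL-Analysis.Analysis"
begin

text \<open>Local-coordinate formalization: the manifold is replaced by an open chart domain
U in real^'n, tensors are given by their components in the coordinate frame.
Lower-index (covector) fields are maps U -> real^'n, metrics are maps U -> real^'n^'n.\<close>

definition pd :: "'n::finite \<Rightarrow> (real^'n \<Rightarrow> real) \<Rightarrow> real^'n \<Rightarrow> real" where
  "pd i f x = deriv (\<lambda>t. f (x + t *\<^sub>R axis i 1)) 0"

definition pds :: "'n::finite list \<Rightarrow> (real^'n \<Rightarrow> real) \<Rightarrow> real^'n \<Rightarrow> real" where
  "pds is f = foldr pd is f"

definition smooth_on :: "(real^'n::finite) set \<Rightarrow> (real^'n \<Rightarrow> real) \<Rightarrow> bool" where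
  "smooth_on U f \<longleftrightarrow> (\<forall>is. \<forall>x\<in>U. pds is f differentiable (at x))"

definition ginv :: "(real^'n \<Rightarrow> real^'n^'n) \<Rightarrow> real^'n \<Rightarrow> real^'n^'n::finite" where
  "ginv g x = matrix_inv (g x)"

text \<open>Christoffel symbols of the Levi-Civita connection, chr g k i j = Gamma^k_{ij}.\<close>
definition chr :: "(real^'n \<Rightarrow> real^'n^'n) \<Rightarrow> 'n::finite \<Rightarrow> 'n \<Rightarrow> 'n \<Rightarrow> real^'n \<Rightarrow> real" where
  "chr g k i j x = (1/2) * (\<Sum>l\<in>UNIV. ginv g x $ k $ l *
      (pd i (\<lambda>y. g y $ j $ l) x + pd j (\<lambda>y. g y $ i $ l) x - pd l (\<lambda>y. g y $ i $ j) x))"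

definition cov1 :: "(real^'n \<Rightarrow> real^'n^'n) \<Rightarrow> (real^'n \<Rightarrow> real^'n) \<Rightarrow> 'n::finite \<Rightarrow> 'n \<Rightarrow> real^'n \<Rightarrow> real" where
  "cov1 g w i j x = pd i (\<lambda>y. w y $ j) x - (\<Sum>k\<in>UNIV. chr g k i j x * w x $ k)"

definition cov2 :: "(real^'n \<Rightarrow> real^'n^'n) \<Rightarrow> (real^'n \<Rightarrow> 'n \<Rightarrow> 'n \<Rightarrow> real) \<Rightarrow> 'n::finite \<Rightarrow> 'n \<Rightarrow> 'n \<Rightarrow> real^'n \<Rightarrow> real" where
  "cov2 g T c a b x = pd c (\<lambda>y. T y a b) x
      - (\<Sum>k\<in>UNIV. chr g k c a x * T x k b) - (\<Sum>k\<in>UNIV. chr g k c b x * T x a k)"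

definition ricci :: "(real^'n \<Rightarrow> real^'n^'n) \<Rightarrow> 'n::finite \<Rightarrow> 'n \<Rightarrow> real^'n \<Rightarrow> real" where
  "ricci g i j x = (\<Sum>k\<in>UNIV. pd k (\<lambda>y. chr g k i j y) x - pd j (\<lambda>y. chr g k i k y) x)
      + (\<Sum>k\<in>UNIV. \<Sum>l\<in>UNIV. chr g k k l x * chr g l i j x - chr g k j l x * chr g l i k x)"

definition raise :: "(real^'n \<Rightarrow> real^'n^'n) \<Rightarrow> (real^'n \<Rightarrow> real^'n) \<Rightarrow> real^'n \<Rightarrow> real^'n::finite" where
  "raise g w x = ginv g x *v w x"

definition symcov :: "(real^'n \<Rightarrow> real^'n^'n) \<Rightarrow> (real^'n \<Rightarrow> real^'n) \<Rightarrow> 'n::finite \<Rightarrow> 'n \<Rightarrow> real^'n \<Rightarrow> real" where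
  "symcov g w a b x = (cov1 g w a b x + cov1 g w b a x) / 2"

definition div1 :: "(real^'n \<Rightarrow> real^'n^'n) \<Rightarrow> (real^'n \<Rightarrow> real^'n) \<Rightarrow> real^'n::finite \<Rightarrow> real" where
  "div1 g w x = (\<Sum>a\<in>UNIV. \<Sum>b\<in>UNIV. ginv g x $ a $ b * cov1 g w a b x)"

definition normsq :: "(real^'n \<Rightarrow> real^'n^'n) \<Rightarrow> (real^'n \<Rightarrow> real^'n) \<Rightarrow> real^'n::finite \<Rightarrow> real" where
  "normsq g w x = (\<Sum>a\<in>UNIV. \<Sum>b\<in>UNIV. ginv g x $ a $ b * w x $ a * w x $ b)"

definition Kf :: "(real^'n \<Rightarrow> real^'n) \<Rightarrow> (real^'n \<Rightarrow> real) \<Rightarrow> real^'n \<Rightarrow> real^'n::finite" where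
  "Kf X Gam x = (\<chi> a. Gam x * X x $ a + pd a Gam x)"

definition Ff :: "(real^'n \<Rightarrow> real^'n^'n) \<Rightarrow> (real^'n \<Rightarrow> real^'n) \<Rightarrow> real \<Rightarrow> real^'n::finite \<Rightarrow> real" where
  "Ff g X lam x = normsq g X x / 2 - div1 g X x / 2 + lam"

text \<open>A defined by F = A/Gamma + |K|^2/Gamma^2\<close>
definition Af :: "(real^'n \<Rightarrow> real^'n^'n) \<Rightarrow> (real^'n \<Rightarrow> real^'n) \<Rightarrow> (real^'n \<Rightarrow> real) \<Rightarrow> real \<Rightarrow> real^'n::finite \<Rightarrow> real" where
  "Af g X Gam lam x = Gam x * (Ff g X lam x - normsq g (Kf X Gam) x / (Gam x)^2)"

end

theory Submission
  imports Defs
begin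

text \<open>After substituting \<open>K\<^sub>a = \<Gamma> X\<^sub>a + \<nabla>\<^sub>a\<Gamma>\<close> and
  multiplying by \<open>2\<Gamma>\<^sup>2\<close>, the left-hand side is a contraction against \<open>g\<^sup>b\<^sup>c\<close> of a polynomial
  in \<open>\<Gamma>\<close>, \<open>X\<close> and their covariant derivatives of order at most three. Two geometric identities
  make it vanish: the contracted second Bianchi identity \<open>\<nabla>\<^sup>bR\<^sub>a\<^sub>b = \<nabla>\<^sub>aR/2\<close>, into which the
  equation for \<open>R\<^sub>a\<^sub>b\<close> is substituted, and the Ricci identity
  \<open>\<nabla>\<^sup>b\<nabla>\<^sub>b\<nabla>\<^sub>a\<Gamma> - \<nabla>\<^sub>a\<nabla>\<^sup>b\<nabla>\<^sub>b\<Gamma> = R\<^sub>a\<^sub>b\<nabla>\<^sup>b\<Gamma>\<close>, into which it is substituted once more.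
  What remains is skew in the two contracted indices and drops out against the symmetric
  \<open>g\<^sup>b\<^sup>c\<close>.\<close>

section \<open>Partial derivatives\<close>

lemma has_derivative_along_line:
  assumes "(f has_derivative F) (at (x + s0 *\<^sub>R v))"
  shows "((\<lambda>s. f (x + s *\<^sub>R v)) has_real_derivative F v) (at s0)"
proof -
  have line: "((\<lambda>s::real. x + s *\<^sub>R v) has_derivative (\<lambda>t. t *\<^sub>R v)) (at s0)"
    by (auto intro!: derivative_eq_intros)
  have "((\<lambda>s. f (x + s *\<^sub>R v)) has_derivative (\<lambda>t. F (t *\<^sub>R v))) (at s0)"
    using has_derivative_compose[OF line assms] by simp
  moreover have "(\<lambda>t. F (t *\<^sub>R v)) = (*) (F v)"
    using linear_simps(5)[OF has_derivative_bounded_linear[OF assms]] by (auto simp: fun_eq_iff)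
  ultimately show ?thesis by (simp add: has_field_derivative_def)
qed

lemma pd_eq_derivative: "(f has_derivative F) (at x) \<Longrightarrow> pd i f x = F (axis i 1)"
  unfolding pd_def by (rule DERIV_imp_deriv) (rule has_derivative_along_line, simp)

lemma pd_eq_frechet_derivative:
  "f differentiable (at x) \<Longrightarrow> pd i f x = frechet_derivative f (at x) (axis i 1)"
  by (rule pd_eq_derivative) (simp add: frechet_derivative_works[symmetric])

lemma has_real_derivative_pd_along_axis:
  assumes "f differentiable (at (x + s0 *\<^sub>R axis i 1))"
  shows "((\<lambda>s. f (x + s *\<^sub>R axis i 1)) has_real_derivative pd i f
        (x + s0 *\<^sub>R axis i 1)) (at s0)"
  using assms has_derivative_along_line[of f _ x s0 "axis i 1"]
  by (simp add: pd_eq_frechet_derivative frechet_derivative_works[symmetric])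

lemma pd_const: "pd i (\<lambda>y. c) x = 0"
  by (subst pd_eq_derivative[of _ "\<lambda>_. 0"]) (auto intro: derivative_eq_intros)

lemma pd_add:
  "f differentiable (at x) \<Longrightarrow> h differentiable (at x) \<Longrightarrow>
   pd i (\<lambda>y. f y + h y) x = pd i f x + pd i h x"
  unfolding frechet_derivative_works
  by (subst pd_eq_derivative[OF has_derivative_add], assumption+)
    (simp add: pd_eq_frechet_derivative frechet_derivative_works[symmetric])

lemma pd_diff:
  "f differentiable (at x) \<Longrightarrow> h differentiable (at x) \<Longrightarrow>
   pd i (\<lambda>y. f y - h y) x = pd i f x - pd i h x"
  unfolding frechet_derivative_works
  by (subst pd_eq_derivative[OF has_derivative_diff], assumption+)
    (simp add: pd_eq_frechet_derivative frechet_derivative_works[symmetric])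

lemma pd_mult:
  "f differentiable (at x) \<Longrightarrow> h differentiable (at x) \<Longrightarrow>
   pd i (\<lambda>y. f y * h y) x = pd i f x * h x + f x * pd i h x"
  unfolding frechet_derivative_works
  by (subst pd_eq_derivative[OF has_derivative_mult], assumption+)
    (simp add: pd_eq_frechet_derivative frechet_derivative_works[symmetric])

lemma pd_divide_const: "f differentiable (at x) \<Longrightarrow> pd i (\<lambda>y. f y / c) x
  = pd i f x / c"
  using pd_mult[of f x "\<lambda>_. inverse c" i] by (simp add: pd_const divide_inverse)

lemma pd_inverse:
  assumes "f differentiable (at x)" "f x \<noteq> 0"
  shows "pd i (\<lambda>y. inverse (f y)) x = - (pd i f x / (f x)^2)"
proof -
  have f': "(f has_derivative frechet_derivative f (at x)) (at x)"
    using assms(1) frechet_derivative_works by blast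
  show ?thesis
    by (subst pd_eq_derivative[OF Deriv.has_derivative_inverse[OF assms(2) f']])
      (simp add: pd_eq_derivative[OF f'] power2_eq_square field_simps)
qed

lemma pd_divide_square:
  assumes f: "f differentiable (at x)" and h: "h differentiable (at x)" and "h x \<noteq> 0"
  shows "pd i (\<lambda>y. f y / (h y)^2) x = pd i f x / (h x)^2 - 2 * f x * pd i h x / (h x)^3"
proof -
  have h2: "(\<lambda>y. (h y)^2) differentiable (at x)"
    using h by (simp add: power2_eq_square differentiable_mult)
  have "pd i (\<lambda>y. f y / (h y)^2) x = pd i (\<lambda>y. f y * inverse ((h y)^2)) x"
    by (simp add: divide_inverse)
  also have "\<dots> = pd i f x * inverse ((h x)^2) + f x * pd i (\<lambda>y. inverse ((h y)^2)) x"
    using f h2 assms(3) by (simp add: pd_mult differentiable_inverse)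
  also have "pd i (\<lambda>y. inverse ((h y)^2)) x = - (pd i (\<lambda>y. (h y)^2) x / ((h x)^2)^2)"
    using h2 assms(3) by (simp add: pd_inverse)
  also have "pd i (\<lambda>y. (h y)^2) x = 2 * h x * pd i h x"
    using h by (simp add: power2_eq_square pd_mult)
  finally show ?thesis using assms(3) by (simp add: field_simps power2_eq_square power3_eq_cube)
qed

lemma pd_sum:
  "finite A \<Longrightarrow> (\<And>k. k \<in> A \<Longrightarrow> F k differentiable (at x))
      \<Longrightarrow>
   pd i (\<lambda>y. \<Sum>k\<in>A. F k y) x = (\<Sum>k\<in>A. pd i (F k) x)"
proof (induction A rule: finite_induct)
  case empty
  then show ?case by (simp add: pd_const)
next
  case (insert a A)
  have "(\<lambda>y. \<Sum>k\<in>A. F k y) differentiable (at x)"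
    using insert by (intro differentiable_sum) auto
  with insert show ?case by (simp add: pd_add)
qed

lemma pd_cong:
  assumes "open U" "x \<in> U" "\<And>y. y \<in> U \<Longrightarrow> f y = h y"
  shows "pd i f x = pd i h x"
proof -
  obtain e where e: "e > 0" "ball x e \<subseteq> U" using assms openE by blast
  have "\<forall>\<^sub>F t in nhds 0. f (x + t *\<^sub>R axis i 1) = h (x + t *\<^sub>R axis i 1)"
    unfolding eventually_nhds_metric
  proof (intro exI[of _ e] conjI allI impI)
    fix t :: real
    assume "dist t 0 < e"
    then have "x + t *\<^sub>R axis i 1 \<in> ball x e" by (simp add: dist_norm)
    then show "f (x + t *\<^sub>R axis i 1) = h (x + t *\<^sub>R axis i 1)" using e assms(3) by auto
  qed (use e in auto)
  then show ?thesis unfolding pd_def by (rule deriv_cong_ev) simp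
qed

lemma differentiable_cong_open:
  assumes "open U" "x \<in> U" "\<And>y. y \<in> U \<Longrightarrow> f y = h y" "f differentiable (at x)"
  shows "h differentiable (at x)"
  using assms has_derivative_transform_within_open unfolding differentiable_def by blast

definition mixed_diff :: "(real^'n::finite \<Rightarrow> real) \<Rightarrow> 'n \<Rightarrow> 'n
  \<Rightarrow> real^'n \<Rightarrow> real \<Rightarrow> real" where
  "mixed_diff f i j x t = f (x + t *\<^sub>R axis j 1 + t *\<^sub>R axis i 1)
      - f (x + t *\<^sub>R axis i 1)
     - f (x + t *\<^sub>R axis j 1) + f x"

lemma mixed_diff_commute: "mixed_diff f i j x t = mixed_diff f j i x t"
  by (simp add: mixed_diff_def algebra_simps)

lemma mixed_diff_mean_value:
  assumes "t > 0"
    and df: "\<And>s. 0 \<le> s \<Longrightarrow> s \<le> t \<Longrightarrow>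
      f differentiable (at (x + t *\<^sub>R axis j 1 + s *\<^sub>R axis i 1))
          \<and> f differentiable (at (x + s *\<^sub>R axis i 1))"
  obtains \<xi> where "0 < \<xi>" "\<xi> < t"
    "mixed_diff f i j x t
        = t * (pd i f (x + t *\<^sub>R axis j 1 + \<xi> *\<^sub>R axis i 1)
          - pd i f (x + \<xi> *\<^sub>R axis i 1))"
proof -
  define \<phi> where "\<phi> s = f (x + t *\<^sub>R axis j 1 + s *\<^sub>R axis i 1)
      - f (x + s *\<^sub>R axis i 1)" for s
  have der: "(\<phi> has_real_derivative
      pd i f (x + t *\<^sub>R axis j 1 + s *\<^sub>R axis i 1) - pd i f (x + s *\<^sub>R axis i 1))
          (at s)"
    if "0 \<le> s" "s \<le> t" for s
    unfolding \<phi>_def using df[OF that]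
    by (intro DERIV_diff
          has_real_derivative_pd_along_axis[of f "x + t *\<^sub>R axis j 1" s i, simplified]
        has_real_derivative_pd_along_axis) auto
  obtain \<xi> where "0 < \<xi>" "\<xi> < t" "\<phi> t - \<phi> 0
      = (t - 0) * (pd i f (x + t *\<^sub>R axis j 1 + \<xi> *\<^sub>R axis i 1)
            - pd i f (x + \<xi> *\<^sub>R axis i 1))"
    using MVT2[of 0 t \<phi>, OF _ der] \<open>t > 0\<close> by auto
  then show ?thesis by (intro that) (auto simp: \<phi>_def mixed_diff_def algebra_simps)
qed

lemma mixed_diff_approx:
  fixes f :: "real^'n::finite \<Rightarrow> real"
  assumes "open U" "x \<in> U"
    and df: "\<And>y. y \<in> U \<Longrightarrow> f differentiable (at y)"
    and dfi: "pd i f differentiable (at x)"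
    and "e > 0"
  shows "\<exists>t0>0. \<forall>t. 0 < t \<and> t < t0
      \<longrightarrow> \<bar>mixed_diff f i j x t - t^2 * pd j (pd i f) x\<bar> \<le> 3 * e * t^2"
proof -
  obtain r where r: "r > 0" "ball x r \<subseteq> U" using assms(1,2) openE by blast
  define F where "F = frechet_derivative (pd i f) (at x)"
  have F: "(pd i f has_derivative F) (at x)" using dfi F_def frechet_derivative_works by blast
  have lin: "linear F" using has_derivative_bounded_linear[OF F] bounded_linear.linear by blast
  obtain d where d: "d > 0"
    and lin_approx: "\<And>y. norm (y - x) < d \<Longrightarrow> \<bar>pd i f y - pd i f x
        - F (y - x)\<bar> \<le> e * norm (y - x)"
    using F \<open>e > 0\<close> unfolding has_derivative_at_alt by (metis real_norm_def)
  show ?thesis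
  proof (intro exI[of _ "min r d / 3"] conjI allI impI)
    show "min r d / 3 > 0" using r d by simp
    fix t :: real
    assume t: "0 < t \<and> t < min r d / 3"
    let ?ei = "axis i 1 :: real^'n" and ?ej = "axis j 1 :: real^'n"
    have near: "norm (x + a *\<^sub>R ?ej + b *\<^sub>R ?ei - x) \<le> 2 * t" if "0 \<le> a" "a
        \<le> t" "0 \<le> b" "b \<le> t" for a b
      using norm_triangle_ineq[of "a *\<^sub>R ?ej" "b *\<^sub>R ?ei"] that by (simp add: add.assoc)
    have "x + a *\<^sub>R ?ej + b *\<^sub>R ?ei \<in> U" if "0 \<le> a" "a \<le> t" "0 \<le> b" "b
        \<le> t" for a b
    proof -
      have "dist x (x + a *\<^sub>R ?ej + b *\<^sub>R ?ei) \<le> 2 * t"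
        using near[OF that] by (simp add: dist_norm norm_minus_commute add.commute)
      then show ?thesis using t r(2) by auto
    qed
    from this[of t] this[of 0] obtain \<xi> where \<xi>: "0 < \<xi>" "\<xi> < t"
      and mvt: "mixed_diff f i j x t
          = t * (pd i f (x + t *\<^sub>R ?ej + \<xi> *\<^sub>R ?ei)
            - pd i f (x + \<xi> *\<^sub>R ?ei))"
      using mixed_diff_mean_value[of t f x j i] t df by auto
    define A where "A = x + t *\<^sub>R ?ej + \<xi> *\<^sub>R ?ei"
    define B where "B = x + \<xi> *\<^sub>R ?ei"
    have "norm (A - x) \<le> 2 * t" "norm (B - x) \<le> t"
      using near[of t \<xi>] \<xi> t by (auto simp: A_def B_def)
    then have "\<bar>pd i f A - pd i f x - F (A - x)\<bar> \<le> e * (2 * t)"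
      and "\<bar>pd i f B - pd i f x - F (B - x)\<bar> \<le> e * t"
      using lin_approx[of A] lin_approx[of B] t \<open>e > 0\<close>
      by (auto intro: order_trans mult_left_mono)
    moreover have "F (A - x) - F (B - x) = t * F ?ej"
      using linear_diff[OF lin, of "A - x" "B - x"] linear_cmul[OF lin]
      by (simp add: A_def B_def)
    ultimately have "\<bar>(pd i f A - pd i f B) - t * F ?ej\<bar> \<le> 3 * e * t"
      unfolding abs_le_iff by linarith
    then have "t * \<bar>(pd i f A - pd i f B) - t * F ?ej\<bar> \<le> t * (3 * e * t)"
      using t by (intro mult_left_mono) auto
    moreover have "mixed_diff f i j x t - t^2 * pd j (pd i f) x
        = t * ((pd i f A - pd i f B) - t * F ?ej)"
      using mvt pd_eq_derivative[OF F, of j] by (simp add: A_def B_def power2_eq_square algebra_simps)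
    ultimately show "\<bar>mixed_diff f i j x t - t^2 * pd j (pd i f) x\<bar> \<le> 3 * e * t^2"
      using t by (simp add: abs_mult power2_eq_square mult_ac)
  qed
qed

lemma pd_commute:
  fixes f :: "real^'n::finite \<Rightarrow> real"
  assumes "open U" "x \<in> U"
    and df: "\<And>y. y \<in> U \<Longrightarrow> f differentiable (at y)"
    and "pd i f differentiable (at x)" "pd j f differentiable (at x)"
  shows "pd j (pd i f) x = pd i (pd j f) x"
proof (rule ccontr)
  assume ne: "pd j (pd i f) x \<noteq> pd i (pd j f) x"
  define e where "e = \<bar>pd j (pd i f) x - pd i (pd j f) x\<bar> / 12"
  have e: "e > 0" using ne by (simp add: e_def)
  obtain t1 where t1: "t1 > 0"
      "\<And>t. 0 < t \<Longrightarrow> t < t1 \<Longrightarrow> \<bar>mixed_diff f i j x t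
          - t^2 * pd j (pd i f) x\<bar> \<le> 3 * e * t^2"
    using mixed_diff_approx[OF assms(1-4) e] by blast
  obtain t2 where t2: "t2 > 0"
      "\<And>t. 0 < t \<Longrightarrow> t < t2 \<Longrightarrow> \<bar>mixed_diff f i j x t
          - t^2 * pd i (pd j f) x\<bar> \<le> 3 * e * t^2"
    using mixed_diff_approx[OF assms(1-3,5) e] by (metis mixed_diff_commute)
  define t where "t = min t1 t2 / 2"
  have t: "0 < t" "t < t1" "t < t2" using t1 t2 by (auto simp: t_def)
  have "t^2 * \<bar>pd j (pd i f) x - pd i (pd j f) x\<bar>
      = \<bar>t^2 * (pd j (pd i f) x - pd i (pd j f) x)\<bar>"
    by (simp add: abs_mult)
  also have "\<dots>
      = \<bar>(mixed_diff f i j x t - t^2 * pd i (pd j f) x)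
          - (mixed_diff f i j x t - t^2 * pd j (pd i f) x)\<bar>"
    by (simp add: algebra_simps)
  also have "\<dots> \<le> 6 * e * t^2"
    using t1(2)[OF t(1,2)] t2(2)[OF t(1,3)] by linarith
  finally have "t^2 * (12 * e) \<le> t^2 * (6 * e)" unfolding e_def by (simp add: mult_ac)
  then show False using t e by (simp add: mult_le_cancel_left)
qed

section \<open>Smoothness\<close>

definition smooth_upto :: "(real^'n::finite) set \<Rightarrow> nat \<Rightarrow>
  (real^'n \<Rightarrow> real) \<Rightarrow> bool" where
  "smooth_upto U n f \<longleftrightarrow>
      (\<forall>is. length is \<le> n
        \<longrightarrow> (\<forall>x\<in>U. pds is f differentiable (at x)))"

lemma pds_Nil [simp]: "pds [] f = f"
  by (simp add: pds_def)

lemma pds_Cons [simp]: "pds (i # is) f = pd i (pds is f)"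
  by (simp add: pds_def)

lemma pds_snoc: "pds (is @ [j]) f = pds is (pd j f)"
  by (simp add: pds_def)

lemma pds_cong:
  "open U \<Longrightarrow> (\<And>y. y \<in> U \<Longrightarrow> f y = h y)
      \<Longrightarrow> y \<in> U \<Longrightarrow> pds is f y = pds is h y"
proof (induction "is" arbitrary: y)
  case Nil
  then show ?case by simp
next
  case (Cons i "is")
  then show ?case by (simp add: pd_cong[of U y "pds is f" "pds is h"])
qed

lemma smooth_on_iff_smooth_upto: "smooth_on U f \<longleftrightarrow> (\<forall>n. smooth_upto U n f)"
  unfolding smooth_on_def smooth_upto_def by auto

lemma smooth_upto_0_iff: "smooth_upto U 0 f \<longleftrightarrow>
  (\<forall>x\<in>U. f differentiable (at x))"
  unfolding smooth_upto_def by auto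

lemma smooth_upto_mono: "smooth_upto U n f \<Longrightarrow> m \<le> n
  \<Longrightarrow> smooth_upto U m f"
  unfolding smooth_upto_def by auto

lemma smooth_upto_differentiable: "smooth_upto U n f \<Longrightarrow> x \<in> U
  \<Longrightarrow> f differentiable (at x)"
  unfolding smooth_upto_def by (drule spec[of _ "[]"]) simp

lemma smooth_upto_pd: "smooth_upto U (Suc n) f \<Longrightarrow> smooth_upto U n (pd j f)"
  unfolding smooth_upto_def by (metis length_append_singleton not_less_eq_eq pds_snoc)

lemma smooth_upto_cong:
  assumes "open U" "smooth_upto U n f" "\<And>y. y \<in> U \<Longrightarrow> f y = h y"
  shows "smooth_upto U n h"
  unfolding smooth_upto_def
proof (intro allI impI ballI)
  fix "is" :: "'a list" and x
  assume "length is \<le> n" "x \<in> U"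
  then have "pds is f differentiable (at x)" using assms(2) unfolding smooth_upto_def by blast
  then show "pds is h differentiable (at x)"
    using differentiable_cong_open[OF assms(1) \<open>x \<in> U\<close>]
        pds_cong[OF assms(1), of f h] assms(3) by blast
qed

text \<open>The product rule for \<open>pd\<close> holds only pointwise on \<open>U\<close>, hence the detour through \<open>h\<close>.\<close>

lemma smooth_upto_SucI:
  assumes "open U" "smooth_upto U 0 f"
    and "\<And>j. \<exists>h. smooth_upto U n h \<and> (\<forall>y\<in>U. pd j f y = h y)"
  shows "smooth_upto U (Suc n) f"
  unfolding smooth_upto_def
proof (intro allI impI ballI)
  fix "is" :: "'a list" and x
  assume l: "length is \<le> Suc n" and x: "x \<in> U"
  show "pds is f differentiable (at x)"
  proof (cases "is" rule: rev_exhaust)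
    case Nil
    then show ?thesis using assms(2) x by (simp add: smooth_upto_0_iff)
  next
    case (snoc is' j)
    obtain h where "smooth_upto U n h" "\<forall>y\<in>U. pd j f y = h y" using assms(3) by blast
    then have "smooth_upto U n (pd j f)" using smooth_upto_cong[OF assms(1)] by metis
    then show ?thesis using l x snoc unfolding smooth_upto_def by (simp add: pds_snoc)
  qed
qed

lemma smooth_upto_const: "open U \<Longrightarrow> smooth_upto U n (\<lambda>y. c)"
proof (induction n arbitrary: c)
  case 0
  then show ?case by (simp add: smooth_upto_0_iff)
next
  case (Suc n)
  show ?case
    by (rule smooth_upto_SucI[OF Suc.prems])
      (use Suc.IH[OF Suc.prems, of 0] in \<open>auto simp: smooth_upto_0_iff pd_const\<close>)
qed

lemma smooth_upto_add:
  "open U \<Longrightarrow> smooth_upto U n f \<Longrightarrow> smooth_upto U n h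
      \<Longrightarrow> smooth_upto U n (\<lambda>y. f y + h y)"
proof (induction n arbitrary: f h)
  case 0
  then show ?case unfolding smooth_upto_0_iff by (blast intro: differentiable_add)
next
  case (Suc n)
  show ?case
  proof (rule smooth_upto_SucI[OF Suc.prems(1)])
    show "smooth_upto U 0 (\<lambda>y. f y + h y)"
      using Suc.prems unfolding smooth_upto_0_iff
      by (blast intro: differentiable_add smooth_upto_differentiable)
    fix j
    have "smooth_upto U n (\<lambda>y. pd j f y + pd j h y)"
      using Suc.prems by (intro Suc.IH smooth_upto_pd)
    moreover have "\<forall>y\<in>U. pd j (\<lambda>y. f y + h y) y = pd j f y + pd j h y"
      using Suc.prems by (blast intro: pd_add smooth_upto_differentiable)
    ultimately show "\<exists>k. smooth_upto U n k
        \<and> (\<forall>y\<in>U. pd j (\<lambda>y. f y + h y) y = k y)" by blast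
  qed
qed

lemma smooth_upto_mult:
  "open U \<Longrightarrow> smooth_upto U n f \<Longrightarrow> smooth_upto U n h
      \<Longrightarrow> smooth_upto U n (\<lambda>y. f y * h y)"
proof (induction n arbitrary: f h)
  case 0
  then show ?case unfolding smooth_upto_0_iff by (blast intro: differentiable_mult)
next
  case (Suc n)
  show ?case
  proof (rule smooth_upto_SucI[OF Suc.prems(1)])
    show "smooth_upto U 0 (\<lambda>y. f y * h y)"
      using Suc.prems unfolding smooth_upto_0_iff
      by (blast intro: differentiable_mult smooth_upto_differentiable)
    fix j
    have "smooth_upto U n f" "smooth_upto U n h"
      using Suc.prems smooth_upto_mono[of U "Suc n" _ n] by auto
    then have "smooth_upto U n (\<lambda>y. pd j f y * h y + f y * pd j h y)"
      using Suc.prems by (intro smooth_upto_add Suc.IH smooth_upto_pd)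
    moreover have "\<forall>y\<in>U. pd j (\<lambda>y. f y * h y) y = pd j f y * h y + f y * pd j h y"
      using Suc.prems by (blast intro: pd_mult smooth_upto_differentiable)
    ultimately show "\<exists>k. smooth_upto U n k
        \<and> (\<forall>y\<in>U. pd j (\<lambda>y. f y * h y) y = k y)" by blast
  qed
qed

lemma smooth_upto_inverse:
  "open U \<Longrightarrow> smooth_upto U n f \<Longrightarrow> (\<forall>y\<in>U. f y \<noteq> 0)
      \<Longrightarrow> smooth_upto U n (\<lambda>y. inverse (f y))"
proof (induction n arbitrary: f)
  case 0
  then show ?case unfolding smooth_upto_0_iff by (blast intro: differentiable_inverse)
next
  case (Suc n)
  show ?case
  proof (rule smooth_upto_SucI[OF Suc.prems(1)])
    show "smooth_upto U 0 (\<lambda>y. inverse (f y))"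
      using Suc.prems unfolding smooth_upto_0_iff
      by (blast intro: differentiable_inverse smooth_upto_differentiable)
    fix j
    have "smooth_upto U n (\<lambda>y. inverse (f y))"
      using Suc smooth_upto_mono[of U "Suc n" f n] by auto
    then have "smooth_upto U n (\<lambda>y. (-1) * (pd j f y * (inverse (f y) * inverse (f y))))"
      using Suc.prems smooth_upto_const
      by (intro smooth_upto_mult smooth_upto_pd) auto
    moreover have "\<forall>y\<in>U. pd j (\<lambda>y. inverse (f y)) y
        = (-1) * (pd j f y * (inverse (f y) * inverse (f y)))"
    proof
      fix y
      assume "y \<in> U"
      then have "f differentiable (at y)" "f y \<noteq> 0"
        using Suc.prems smooth_upto_differentiable by auto
      then show "pd j (\<lambda>y. inverse (f y)) y
          = (-1) * (pd j f y * (inverse (f y) * inverse (f y)))"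
        by (simp add: pd_inverse power2_eq_square divide_inverse)
    qed
    ultimately show "\<exists>k. smooth_upto U n k
        \<and> (\<forall>y\<in>U. pd j (\<lambda>y. inverse (f y)) y = k y)" by blast
  qed
qed

lemma smooth_on_const [simp, intro]: "open U \<Longrightarrow> smooth_on U (\<lambda>y. c)"
  by (simp add: smooth_on_iff_smooth_upto smooth_upto_const)

lemma smooth_on_add [intro]:
  "open U \<Longrightarrow> smooth_on U f \<Longrightarrow> smooth_on U h
      \<Longrightarrow> smooth_on U (\<lambda>y. f y + h y)"
  by (simp add: smooth_on_iff_smooth_upto smooth_upto_add)

lemma smooth_on_mult [intro]:
  "open U \<Longrightarrow> smooth_on U f \<Longrightarrow> smooth_on U h
      \<Longrightarrow> smooth_on U (\<lambda>y. f y * h y)"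
  by (simp add: smooth_on_iff_smooth_upto smooth_upto_mult)

lemma smooth_on_uminus [intro]: "open U \<Longrightarrow> smooth_on U f
  \<Longrightarrow> smooth_on U (\<lambda>y. - f y)"
  using smooth_on_mult[of U "\<lambda>_. -1" f] by simp

lemma smooth_on_diff [intro]:
  "open U \<Longrightarrow> smooth_on U f \<Longrightarrow> smooth_on U h
      \<Longrightarrow> smooth_on U (\<lambda>y. f y - h y)"
  using smooth_on_add[of U f "\<lambda>y. - h y"] smooth_on_uminus[of U h] by simp

lemma smooth_on_inverse [intro]:
  "open U \<Longrightarrow> smooth_on U f \<Longrightarrow> (\<forall>y\<in>U. f y \<noteq> 0)
      \<Longrightarrow> smooth_on U (\<lambda>y. inverse (f y))"
  by (simp add: smooth_on_iff_smooth_upto smooth_upto_inverse)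

lemma smooth_on_divide [intro]:
  "open U \<Longrightarrow> smooth_on U f \<Longrightarrow> smooth_on U h
      \<Longrightarrow> (\<forall>y\<in>U. h y \<noteq> 0)
      \<Longrightarrow> smooth_on U (\<lambda>y. f y / h y)"
  using smooth_on_mult[of U f "\<lambda>y. inverse (h y)"] smooth_on_inverse[of U h]
  by (simp add: divide_inverse)

lemma smooth_on_sum [intro]:
  "open U \<Longrightarrow> (\<And>k. k \<in> A \<Longrightarrow> smooth_on U (F k))
      \<Longrightarrow> smooth_on U (\<lambda>y. \<Sum>k\<in>A. F k y)"
  by (induction A rule: infinite_finite_induct) auto

lemma smooth_on_prod [intro]:
  "open U \<Longrightarrow> (\<And>k. k \<in> A \<Longrightarrow> smooth_on U (F k))
      \<Longrightarrow> smooth_on U (\<lambda>y. \<Prod>k\<in>A. F k y)"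
  by (induction A rule: infinite_finite_induct) auto

lemma smooth_on_pd [intro]: "smooth_on U f \<Longrightarrow> smooth_on U (pd j f)"
  by (simp add: smooth_on_iff_smooth_upto smooth_upto_pd)

lemma smooth_on_differentiable: "smooth_on U f \<Longrightarrow> x \<in> U
  \<Longrightarrow> f differentiable (at x)"
  by (auto simp: smooth_on_iff_smooth_upto intro: smooth_upto_differentiable)

lemma smooth_on_cong:
  "open U \<Longrightarrow> smooth_on U f
      \<Longrightarrow> (\<And>y. y \<in> U \<Longrightarrow> f y = h y)
      \<Longrightarrow> smooth_on U h"
  unfolding smooth_on_iff_smooth_upto using smooth_upto_cong by metis

lemma smooth_on_pd_commute:
  "open U \<Longrightarrow> x \<in> U \<Longrightarrow> smooth_on U f
      \<Longrightarrow> pd j (pd i f) x = pd i (pd j f) x"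
  by (rule pd_commute) (auto intro: smooth_on_differentiable smooth_on_pd)

section \<open>Matrix algebra\<close>

lemma matrix_add_rdistrib: "(A + B) ** C = A ** C + B ** (C::real^'k^'m)"
  by (simp add: matrix_matrix_mult_def vec_eq_iff sum.distrib ring_distribs)

lemma matrix_diff_rdistrib: "(A - B) ** C = A ** C - B ** (C::real^'k^'m)"
  by (simp add: matrix_matrix_mult_def vec_eq_iff sum_subtractf ring_distribs)

lemma matrix_diff_ldistrib: "C ** (A - B) = C ** A - C ** (B::real^'k^'m)"
  by (simp add: matrix_matrix_mult_def vec_eq_iff sum_subtractf ring_distribs)

lemma matrix_mul_uminus_left: "(- A) ** C = - (A ** (C::real^'k^'m))"
  by (simp add: matrix_matrix_mult_def vec_eq_iff sum_negf)

lemma matrix_mul_uminus_right: "C ** (- A) = - (C ** (A::real^'k^'m))"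
  by (simp add: matrix_matrix_mult_def vec_eq_iff sum_negf)

lemma matrix_mul_zero_left: "(0::real^'k^'m) ** C = 0"
  by (simp add: matrix_matrix_mult_def vec_eq_iff)

lemma matrix_mul_zero_right: "C ** (0::real^'k^'m) = 0"
  by (simp add: matrix_matrix_mult_def vec_eq_iff)

lemma matrix_mul_scaleR_left: "(c *\<^sub>R A) ** C = c *\<^sub>R (A ** (C::real^'k^'m))"
  by (simp add: matrix_matrix_mult_def vec_eq_iff sum_distrib_left mult.assoc)

lemma matrix_mul_scaleR_right: "C ** (c *\<^sub>R A) = c *\<^sub>R (C ** (A::real^'k^'m))"
  by (simp add: matrix_matrix_mult_def vec_eq_iff sum_distrib_left mult_ac)

lemma transpose_add: "transpose (A + B) = transpose A + transpose (B::real^'k^'m)"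
  by (simp add: transpose_def vec_eq_iff)

lemma transpose_diff: "transpose (A - B) = transpose A - transpose (B::real^'k^'m)"
  by (simp add: transpose_def vec_eq_iff)

lemma transpose_uminus: "transpose (- A) = - transpose (A::real^'k^'m)"
  by (simp add: transpose_def vec_eq_iff)

lemma transpose_zero: "transpose (0::real^'k^'m) = 0"
  by (simp add: transpose_def vec_eq_iff)

lemmas matrix_ring_simps =
  matrix_add_rdistrib matrix_add_ldistrib matrix_diff_rdistrib matrix_diff_ldistrib
  matrix_mul_uminus_left matrix_mul_uminus_right matrix_mul_zero_left matrix_mul_zero_right
  matrix_mul_scaleR_left matrix_mul_scaleR_right transpose_add transpose_diff transpose_uminus
  transpose_zero matrix_transpose_mul matrix_mul_assoc transpose_transpose

lemma matrix_mul_sum_left: "(\<Sum>k\<in>A. f k) ** (M::real^'n::finite^'n) = (\<Sum>k\<in>A. f k ** M)"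
  by (induction A rule: infinite_finite_induct) (auto simp: matrix_add_rdistrib matrix_mul_zero_left)

lemma matrix_mul_transpose_nth: "(M ** transpose N) $ a $ e = (\<Sum>k\<in>UNIV. M $ a $ k * N $ e $ k)"
  by (simp add: matrix_matrix_mult_def transpose_def)

lemma vector_matrix_mult_nth: "((v::real^'n::finite) v* M) $ b = (\<Sum>k\<in>UNIV. v $ k * M $ k $ b)"
  by (simp add: vector_matrix_mult_def)

lemma sum_swap_outer:
  "(\<Sum>b\<in>A. \<Sum>c\<in>B. \<Sum>k\<in>C. f b c k)
      = (\<Sum>k\<in>C. \<Sum>c\<in>B. \<Sum>b\<in>A. f b c k)"
proof -
  have "(\<Sum>b\<in>A. \<Sum>c\<in>B. \<Sum>k\<in>C. f b c k)
      = (\<Sum>b\<in>A. \<Sum>k\<in>C. \<Sum>c\<in>B. f b c k)"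
    by (rule sum.cong[OF refl]) (rule sum.swap)
  also have "\<dots> = (\<Sum>k\<in>C. \<Sum>b\<in>A. \<Sum>c\<in>B. f b c k)" by (rule sum.swap)
  also have "\<dots> = (\<Sum>k\<in>C. \<Sum>c\<in>B. \<Sum>b\<in>A. f b c k)"
      by (rule sum.cong[OF refl]) (rule sum.swap)
  finally show ?thesis .
qed

lemma sum_skew_sym_contraction:
  fixes A B :: "real^'n::finite^'n"
  assumes "transpose A = - A" "transpose B = B"
  shows "(\<Sum>k\<in>UNIV. \<Sum>i\<in>UNIV. A $ k $ i * B $ i $ k) = 0"
proof -
  have skew: "A $ k $ i = - A $ i $ k" and sym: "B $ i $ k = B $ k $ i" for i k
    using arg_cong[OF assms(1), of "\<lambda>M. M $ i $ k"]
        arg_cong[OF assms(2), of "\<lambda>M. M $ k $ i"]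
    by (simp_all add: transpose_def)
  have "(\<Sum>k\<in>UNIV. \<Sum>i\<in>UNIV. A $ k $ i * B $ i $ k)
      = (\<Sum>i\<in>UNIV. \<Sum>k\<in>UNIV. A $ k $ i * B $ i $ k)"
    by (rule sum.swap)
  also have "\<dots> = (\<Sum>i\<in>UNIV. \<Sum>k\<in>UNIV. - (A $ i $ k * B $ k $ i))"
  proof (intro sum.cong refl)
    fix i k
    show "A $ k $ i * B $ i $ k = - (A $ i $ k * B $ k $ i)"
      by (simp only: skew[of k i] sym[of i k] mult_minus_left)
  qed
  finally show ?thesis by (simp add: sum_negf)
qed

text \<open>The algebraic core of the skew-symmetry of the lowered curvature \<open>g R\<close>: \<open>dg\<close> and \<open>ddg\<close>
  stand for first and second derivatives of the metric, \<open>Gc\<close> and \<open>Gd\<close> for Christoffel matrices,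
  \<open>dGcd\<close> and \<open>dGdc\<close> for their derivatives; the hypothesis \<open>ddgdc = ddgcd\<close> is Schwarz's
  theorem.\<close>

lemma metric_curvature_skew_algebraic:
  fixes gg Gc Gd dGdc dGcd dgc dgd ddgdc ddgcd :: "real^'n::finite^'n"
  assumes "transpose gg = gg"
    and "dgc = transpose Gc ** gg + gg ** Gc" "dgd = transpose Gd ** gg + gg ** Gd"
    and "ddgdc = transpose dGdc ** gg + transpose Gc ** dgd + dgd ** Gc + gg ** dGdc"
    and "ddgcd = transpose dGcd ** gg + transpose Gd ** dgc + dgc ** Gd + gg ** dGcd"
    and "ddgdc = ddgcd"
  shows "transpose (gg ** (dGcd - dGdc + Gc ** Gd - Gd ** Gc)) =
      - (gg ** (dGcd - dGdc + Gc ** Gd - Gd ** Gc))"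
proof -
  have "transpose dGdc ** gg + transpose Gc ** dgd + dgd ** Gc + gg ** dGdc
      = transpose dGcd ** gg + transpose Gd ** dgc + dgc ** Gd + gg ** dGcd"
    using assms(4-6) by simp
  then have "transpose dGcd ** gg + gg ** dGcd = transpose dGdc ** gg + gg ** dGdc
      + transpose Gc ** transpose Gd ** gg - transpose Gd ** transpose Gc ** gg + gg ** Gd ** Gc
          - gg ** Gc ** Gd"
    unfolding assms(2,3) by (simp add: matrix_ring_simps algebra_simps)
  then show ?thesis using assms(1) by (simp add: matrix_ring_simps algebra_simps)
qed

section \<open>Vector- and matrix-valued fields\<close>

definition smooth_vec_on :: "(real^'n::finite) set \<Rightarrow> (real^'n \<Rightarrow> real^'m)
  \<Rightarrow> bool" where
  "smooth_vec_on U w \<longleftrightarrow> (\<forall>b. smooth_on U (\<lambda>y. w y $ b))"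

definition smooth_mat_on :: "(real^'n::finite) set \<Rightarrow> (real^'n \<Rightarrow> real^'m^'k)
  \<Rightarrow> bool" where
  "smooth_mat_on U A \<longleftrightarrow> (\<forall>i j. smooth_on U (\<lambda>y. A y $ i $ j))"

definition smooth_tensor_on :: "(real^'n::finite) set \<Rightarrow>
  (real^'n \<Rightarrow> 'n \<Rightarrow> 'n \<Rightarrow> real) \<Rightarrow> bool" where
  "smooth_tensor_on U T \<longleftrightarrow> (\<forall>p q. smooth_on U (\<lambda>y. T y p q))"

definition pd_vec :: "'n::finite \<Rightarrow> (real^'n \<Rightarrow> real^'m) \<Rightarrow>
  real^'n \<Rightarrow> real^'m" where
  "pd_vec c w x = (\<chi> b. pd c (\<lambda>y. w y $ b) x)"

definition pd_mat :: "'n::finite \<Rightarrow> (real^'n \<Rightarrow> real^'m^'k) \<Rightarrow>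
  real^'n \<Rightarrow> real^'m^'k" where
  "pd_mat c A x = (\<chi> i j. pd c (\<lambda>y. A y $ i $ j) x)"

lemma smooth_vec_on_differentiable:
  "smooth_vec_on U w \<Longrightarrow> x \<in> U
      \<Longrightarrow> (\<lambda>y. w y $ b) differentiable (at x)"
  unfolding smooth_vec_on_def by (blast intro: smooth_on_differentiable)

lemma smooth_mat_on_differentiable:
  "smooth_mat_on U A \<Longrightarrow> x \<in> U
      \<Longrightarrow> (\<lambda>y. A y $ i $ j) differentiable (at x)"
  unfolding smooth_mat_on_def by (blast intro: smooth_on_differentiable)

lemma smooth_tensor_on_differentiable:
  "smooth_tensor_on U T \<Longrightarrow> x \<in> U
      \<Longrightarrow> (\<lambda>y. T y p q) differentiable (at x)"
  unfolding smooth_tensor_on_def by (blast intro: smooth_on_differentiable)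

lemma smooth_vec_on_vector_matrix_mult:
  "open U \<Longrightarrow> smooth_vec_on U w \<Longrightarrow> smooth_mat_on U A
      \<Longrightarrow> smooth_vec_on U (\<lambda>y. w y v* A y)"
  unfolding smooth_vec_on_def smooth_mat_on_def vector_matrix_mult_def
  by (auto intro!: smooth_on_sum smooth_on_mult)

lemma smooth_vec_on_pd_vec: "smooth_vec_on U w \<Longrightarrow> smooth_vec_on U (pd_vec c w)"
  unfolding smooth_vec_on_def pd_vec_def by (auto intro!: smooth_on_pd)

lemma smooth_mat_on_add:
  "open U \<Longrightarrow> smooth_mat_on U A \<Longrightarrow> smooth_mat_on U B
      \<Longrightarrow> smooth_mat_on U (\<lambda>y. A y + B y)"
  unfolding smooth_mat_on_def by (auto intro!: smooth_on_add)

lemma smooth_mat_on_diff: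
  "open U \<Longrightarrow> smooth_mat_on U A \<Longrightarrow> smooth_mat_on U B
      \<Longrightarrow> smooth_mat_on U (\<lambda>y. A y - B y)"
  unfolding smooth_mat_on_def by (auto intro!: smooth_on_diff)

lemma smooth_mat_on_mult:
  "open U \<Longrightarrow> smooth_mat_on U A \<Longrightarrow> smooth_mat_on U B
      \<Longrightarrow> smooth_mat_on U (\<lambda>y. A y ** B y)"
  unfolding smooth_mat_on_def matrix_matrix_mult_def by (auto intro!: smooth_on_sum smooth_on_mult)

lemma smooth_mat_on_transpose: "smooth_mat_on U A
  \<Longrightarrow> smooth_mat_on U (\<lambda>y. transpose (A y))"
  unfolding smooth_mat_on_def transpose_def by auto

lemma smooth_mat_on_pd_mat: "smooth_mat_on U A \<Longrightarrow> smooth_mat_on U (pd_mat c A)"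
  unfolding smooth_mat_on_def pd_mat_def by (auto intro!: smooth_on_pd)

lemma smooth_tensor_on_add:
  "open U \<Longrightarrow> smooth_tensor_on U T1
      \<Longrightarrow> smooth_tensor_on U T2 \<Longrightarrow>
   smooth_tensor_on U (\<lambda>y p q. T1 y p q + T2 y p q)"
  unfolding smooth_tensor_on_def by (auto intro: smooth_on_add)

lemma smooth_tensor_on_scale:
  "open U \<Longrightarrow> smooth_tensor_on U T
      \<Longrightarrow> smooth_tensor_on U (\<lambda>y p q. c * T y p q)"
  unfolding smooth_tensor_on_def by (auto intro: smooth_on_mult)

lemma smooth_tensor_on_product:
  "open U \<Longrightarrow> smooth_vec_on U u \<Longrightarrow> smooth_vec_on U v
      \<Longrightarrow> smooth_tensor_on U (\<lambda>y p q. u y $ p * v y $ q)"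
  unfolding smooth_tensor_on_def smooth_vec_on_def by (auto intro!: smooth_on_mult)

lemma pd_vec_diff:
  assumes "x \<in> U" "smooth_vec_on U w" "smooth_vec_on U v"
  shows "pd_vec c (\<lambda>y. w y - v y) x = pd_vec c w x - pd_vec c v x"
  unfolding pd_vec_def
  by (simp add: vec_eq_iff pd_diff smooth_vec_on_differentiable[OF assms(2,1)]
      smooth_vec_on_differentiable[OF assms(3,1)])

lemma pd_vec_vector_matrix_mult:
  assumes "x \<in> U" "smooth_vec_on U w" "smooth_mat_on U A"
  shows "pd_vec c (\<lambda>y. w y v* A y) x = pd_vec c w x v* A x + w x v* pd_mat c A x"
  unfolding pd_vec_def pd_mat_def vector_matrix_mult_def
  by (simp add: vec_eq_iff pd_sum pd_mult smooth_vec_on_differentiable[OF assms(2,1)]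
      smooth_mat_on_differentiable[OF assms(3,1)] differentiable_mult sum.distrib)

lemma pd_mat_const: "pd_mat c (\<lambda>y. M) x = 0"
  unfolding pd_mat_def by (simp add: vec_eq_iff pd_const)

lemma pd_mat_add:
  assumes "x \<in> U" "smooth_mat_on U A" "smooth_mat_on U B"
  shows "pd_mat c (\<lambda>y. A y + B y) x = pd_mat c A x + pd_mat c B x"
  unfolding pd_mat_def
  by (simp add: vec_eq_iff pd_add smooth_mat_on_differentiable[OF assms(2,1)]
      smooth_mat_on_differentiable[OF assms(3,1)])

lemma pd_mat_diff:
  assumes "x \<in> U" "smooth_mat_on U A" "smooth_mat_on U B"
  shows "pd_mat c (\<lambda>y. A y - B y) x = pd_mat c A x - pd_mat c B x"
  unfolding pd_mat_def
  by (simp add: vec_eq_iff pd_diff smooth_mat_on_differentiable[OF assms(2,1)]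
      smooth_mat_on_differentiable[OF assms(3,1)])

lemma pd_mat_uminus:
  assumes "x \<in> U" "smooth_mat_on U A"
  shows "pd_mat c (\<lambda>y. - A y) x = - pd_mat c A x"
  using pd_diff[of "\<lambda>_. 0" x "\<lambda>y. A y $ i $ j" c
        for i j] smooth_mat_on_differentiable[OF assms(2,1)]
  unfolding pd_mat_def by (simp add: vec_eq_iff pd_const)

lemma pd_mat_mult:
  assumes "x \<in> U" "smooth_mat_on U A" "smooth_mat_on U B"
  shows "pd_mat c (\<lambda>y. A y ** B y) x = pd_mat c A x ** B x + A x ** pd_mat c B x"
  unfolding pd_mat_def matrix_matrix_mult_def
  by (simp add: vec_eq_iff pd_sum pd_mult smooth_mat_on_differentiable[OF assms(2,1)]
      smooth_mat_on_differentiable[OF assms(3,1)] differentiable_mult sum.distrib)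

lemma pd_mat_transpose: "pd_mat c (\<lambda>y. transpose (A y)) x = transpose (pd_mat c A x)"
  unfolding pd_mat_def transpose_def by simp

lemma pd_mat_cong:
  assumes "open U" "x \<in> U" "\<And>y. y \<in> U \<Longrightarrow> A y = B y"
  shows "pd_mat c A x = pd_mat c B x"
proof -
  have "pd c (\<lambda>y. A y $ i $ j) x = pd c (\<lambda>y. B y $ i $ j) x" for i j
    using assms by (intro pd_cong[of U x]) auto
  then show ?thesis unfolding pd_mat_def by (simp add: vec_eq_iff)
qed

lemma pd_mat_commute:
  assumes "open U" "x \<in> U" "smooth_mat_on U A"
  shows "pd_mat e (pd_mat c A) x = pd_mat c (pd_mat e A) x"
  using assms unfolding pd_mat_def smooth_mat_on_def
  by (simp add: vec_eq_iff smooth_on_pd_commute[OF assms(1,2)])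

definition contract :: "('n::finite \<Rightarrow> 'n \<Rightarrow> real) \<Rightarrow>
  ('n \<Rightarrow> 'n \<Rightarrow> real) \<Rightarrow> real" where
  "contract h f = (\<Sum>b\<in>UNIV. \<Sum>c\<in>UNIV. h b c * f b c)"

lemma contract_add: "contract h (\<lambda>b c. f b c + g b c) = contract h f + contract h g"
  unfolding contract_def by (simp add: ring_distribs sum.distrib)

lemma contract_diff: "contract h (\<lambda>b c. f b c - g b c) = contract h f - contract h g"
  unfolding contract_def by (simp add: ring_distribs sum_subtractf)

lemma contract_scale: "contract h (\<lambda>b c. k * f b c) = k * contract h f"
  unfolding contract_def by (simp add: sum_distrib_left mult_ac)

lemma contract_skew:
  assumes "\<And>b c. h b c = h c b" "\<And>b c. E b c + E c b = 0"
  shows "contract h E = 0"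
proof -
  have "contract h E = (\<Sum>c\<in>UNIV. \<Sum>b\<in>UNIV. h b c * E b c)"
    unfolding contract_def by (rule sum.swap)
  also have "\<dots> = contract h (\<lambda>b c. E c b)"
    unfolding contract_def by (simp add: assms(1)[of _ b for b])
  finally have "2 * contract h E = contract h (\<lambda>b c. E b c + E c b)"
    by (simp add: contract_add)
  then show ?thesis by (simp add: assms(2) contract_def)
qed

section \<open>Riemannian geometry in a chart\<close>

lemma cov2_transpose: "cov2 g (\<lambda>y p q. T y q p) c i j x = cov2 g T c j i x"
  unfolding cov2_def by (simp add: algebra_simps)

lemma raise_nth: "raise g w y $ b = (\<Sum>c\<in>UNIV. ginv g y $ b $ c * w y $ c)"
  by (simp add: raise_def matrix_vector_mult_def)

locale riemannian_chart =
  fixes U :: "(real^'n::finite) set" and g :: "real^'n \<Rightarrow> real^'n^'n"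
  assumes U_open: "open U"
    and g_sym: "\<forall>x\<in>U. \<forall>i j. g x $ i $ j = g x $ j $ i"
    and g_pos: "\<forall>x\<in>U. \<forall>v. v \<noteq> 0 \<longrightarrow> v \<bullet> (g x *v v) > 0"
    and g_smooth: "\<forall>i j. smooth_on U (\<lambda>x. g x $ i $ j)"
begin

abbreviation "ginv_at x \<equiv> (\<lambda>b c. ginv g x $ b $ c)"

lemma invertible_g: "x \<in> U \<Longrightarrow> invertible (g x)"
proof -
  assume x: "x \<in> U"
  have "\<forall>v. g x *v v = 0 \<longrightarrow> v = 0"
  proof (intro allI impI)
    fix v assume "g x *v v = 0"
    then have "v \<bullet> (g x *v v) = 0" by simp
    then show "v = 0" using g_pos x by force
  qed
  then show ?thesis unfolding invertible_left_inverse matrix_left_invertible_ker by blast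
qed

lemma g_ginv: "x \<in> U \<Longrightarrow> g x ** ginv g x = mat 1"
  and ginv_g: "x \<in> U \<Longrightarrow> ginv g x ** g x = mat 1"
  using someI_ex[OF invertible_g[unfolded invertible_def]]
  unfolding ginv_def matrix_inv_def by auto

lemma det_g_nonzero: "x \<in> U \<Longrightarrow> det (g x) \<noteq> 0"
  using invertible_g invertible_det_nz by blast

lemma sum_g_ginv: "x \<in> U \<Longrightarrow> (\<Sum>k\<in>UNIV. g x $ i $ k * ginv g x $ k $ j)
  = (if i = j then 1 else 0)"
  using g_ginv[of x] by (simp add: matrix_matrix_mult_def mat_def vec_eq_iff)

lemma sum_ginv_g: "x \<in> U \<Longrightarrow> (\<Sum>k\<in>UNIV. ginv g x $ i $ k * g x $ k $ j)
  = (if i = j then 1 else 0)"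
  using ginv_g[of x] by (simp add: matrix_matrix_mult_def mat_def vec_eq_iff)

lemma transpose_g: "x \<in> U \<Longrightarrow> transpose (g x) = g x"
  using g_sym by (simp add: transpose_def vec_eq_iff)

lemma ginv_sym: "x \<in> U \<Longrightarrow> ginv g x $ i $ j = ginv g x $ j $ i"
proof -
  assume x: "x \<in> U"
  let ?h = "ginv g x"
  have "transpose ?h ** g x = mat 1"
  proof -
    have "transpose (g x ** ?h) = mat 1" using g_ginv[OF x] by (simp add: transpose_mat)
    then show ?thesis using transpose_g[OF x] by (simp add: matrix_transpose_mul)
  qed
  then have "transpose ?h = transpose ?h ** (g x ** ?h)" using g_ginv[OF x] by simp
  also have "\<dots> = ?h" by (simp add: matrix_mul_assoc \<open>transpose ?h ** g x = mat 1\<close>)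
  finally have "transpose ?h $ j $ i = ?h $ j $ i" by simp
  then show ?thesis by (simp add: transpose_def)
qed

lemma ginv_eq_cramer: "x \<in> U \<Longrightarrow>
  ginv g x $ k $ j = det (\<chi> r s. if s = k then axis j 1 $ r else g x $ r $ s) / det (g x)"
proof -
  assume x: "x \<in> U"
  let ?c = "(\<chi> k. ginv g x $ k $ j) :: real^'n"
  have "g x *v ?c = axis j 1"
    using sum_g_ginv[OF x] by (simp add: matrix_vector_mult_def vec_eq_iff axis_def)
  then have "?c = (\<chi> k.
        det(\<chi> i l. if l = k then (axis j 1 :: real^'n) $ i else g x $ i $ l) / det (g x))"
    using cramer[OF det_g_nonzero[OF x]] by blast
  then have "?c $ k = (\<chi> k.
        det(\<chi> i l. if l = k then (axis j 1 :: real^'n) $ i else g x $ i $ l) / det (g x)) $ k"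
      by simp
  then show ?thesis by simp
qed

lemma smooth_g: "smooth_on U (\<lambda>x. g x $ i $ j)" using g_smooth by simp

lemma smooth_on_det: assumes "\<And>i j. smooth_on U (\<lambda>x. M x $ i $ j)"
  shows "smooth_on U (\<lambda>x. det (M x))"
  unfolding det_def using assms U_open
  by (intro smooth_on_sum smooth_on_mult smooth_on_prod smooth_on_const) auto

lemma smooth_ginv: "smooth_on U (\<lambda>x. ginv g x $ i $ j)"
proof (rule smooth_on_cong[OF U_open])
  show "smooth_on U (\<lambda>x. det (\<chi> r s. if s = i then axis j 1 $ r else g x $ r $ s) /
        det (g x))"
  proof (intro smooth_on_divide U_open smooth_on_det ballI)
    fix a b
    show "smooth_on U (\<lambda>x. (\<chi> r s. if s = i then axis j 1 $ r else g x $ r $ s) $ a $ b)"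
      by (cases "b = i") (simp_all add: U_open smooth_g)
  qed (use det_g_nonzero smooth_g in auto)
qed (simp add: ginv_eq_cramer)

lemma smooth_pd_g: "smooth_on U (\<lambda>y. pd l (\<lambda>z. g z $ i $ j) y)"
  using smooth_on_pd[OF smooth_g] by simp

lemma smooth_chr: "smooth_on U (chr g k i j)"
proof -
  have "smooth_on U (\<lambda>x. chr g k i j x)"
    unfolding chr_def using U_open smooth_ginv smooth_pd_g
    by (intro smooth_on_mult smooth_on_sum smooth_on_const smooth_on_add smooth_on_diff U_open) auto
  then show ?thesis by simp
qed

lemma pd_g_sym: "x \<in> U \<Longrightarrow> pd l (\<lambda>y. g y $ i $ j) x
  = pd l (\<lambda>y. g y $ j $ i) x"
  using g_sym by (intro pd_cong[OF U_open]) auto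

lemma chr_sym: "x \<in> U \<Longrightarrow> chr g k i j x = chr g k j i x"
proof -
  assume x: "x \<in> U"
  show ?thesis unfolding chr_def using pd_g_sym[OF x, of _ i j] by (simp add: algebra_simps)
qed

lemma sum_chr_g: "x \<in> U \<Longrightarrow> (\<Sum>k\<in>UNIV. chr g k i j x * g x $ k $ m) =
  (1/2) * (pd i (\<lambda>y. g y $ j $ m) x + pd j (\<lambda>y. g y $ i $ m) x
        - pd m (\<lambda>y. g y $ i $ j) x)"
proof -
  assume x: "x \<in> U"
  define E where "E l = pd i (\<lambda>y. g y $ j $ l) x + pd j (\<lambda>y. g y $ i $ l) x
      - pd l (\<lambda>y. g y $ i $ j) x" for l
  have "(\<Sum>k\<in>UNIV. chr g k i j x * g x $ k $ m)
      = (\<Sum>k\<in>UNIV. \<Sum>l\<in>UNIV. (1/2) * E l * (ginv g x $ l $ k * g x $ k $ m))"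
    unfolding chr_def E_def using ginv_sym[OF x]
    by (simp add: sum_distrib_left sum_distrib_right mult_ac)
  also have "\<dots> =
      (\<Sum>l\<in>UNIV. (1/2) * E l * (\<Sum>k\<in>UNIV. ginv g x $ l $ k * g x $ k $ m))"
    by (subst sum.swap) (simp add: sum_distrib_left)
  also have "\<dots> = (1/2) * E m"
      by (simp add: sum_ginv_g[OF x] of_bool_def[symmetric] del: times_divide_eq_left)
  finally show ?thesis by (simp add: E_def)
qed

text \<open>\<open>chr_mat c x $ a $ b\<close> is \<open>\<Gamma>\<^sup>a\<^sub>c\<^sub>b\<close>: the connection matrix in direction \<open>c\<close>.\<close>

definition chr_mat :: "'n \<Rightarrow> real^'n \<Rightarrow> real^'n^'n" where "chr_mat c x
  = (\<chi> a b. chr g a c b x)"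

lemma chr_mat_nth[simp]: "chr_mat c x $ a $ b = chr g a c b x" by (simp add: chr_mat_def)

lemma smooth_chr_mat: "smooth_mat_on U (chr_mat c)" unfolding smooth_mat_on_def using smooth_chr by simp
lemma smooth_mat_g: "smooth_mat_on U g" unfolding smooth_mat_on_def using smooth_g by simp
lemma smooth_mat_ginv: "smooth_mat_on U (ginv g)" unfolding smooth_mat_on_def using smooth_ginv by simp

lemma pd_g_eq_chr: "x \<in> U \<Longrightarrow> pd c (\<lambda>y. g y $ a $ b) x =
   (\<Sum>k\<in>UNIV. chr g k c a x * g x $ k $ b) + (\<Sum>k\<in>UNIV. g x $ a $ k * chr g k c b x)"
proof -
  assume x: "x \<in> U"
  have "(\<Sum>k\<in>UNIV. g x $ a $ k * chr g k c b x)
      = (\<Sum>k\<in>UNIV. chr g k c b x * g x $ k $ a)"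
    using g_sym x by (simp add: mult.commute)
  then show ?thesis using sum_chr_g[OF x, of c a b] sum_chr_g[OF x, of c b a]
      pd_g_sym[OF x, of c b a] pd_g_sym[OF x, of a c b] pd_g_sym[OF x, of b c a] by simp
qed

lemma pd_mat_g: "x \<in> U \<Longrightarrow> pd_mat c g x = transpose (chr_mat c x) ** g x
  + g x ** chr_mat c x"
  by (simp add: pd_mat_def vec_eq_iff pd_g_eq_chr matrix_matrix_mult_def transpose_def)

lemma mult_g_ginv_cancel: "x \<in> U \<Longrightarrow> X ** g x ** ginv g x = X"
  by (metis g_ginv matrix_mul_assoc matrix_mul_rid)
lemma mult_ginv_g_cancel: "x \<in> U \<Longrightarrow> X ** ginv g x ** g x = X"
  by (metis ginv_g matrix_mul_assoc matrix_mul_rid)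

lemma pd_mat_ginv: "x \<in> U \<Longrightarrow> pd_mat c (ginv g) x =
  - (chr_mat c x ** ginv g x + ginv g x ** transpose (chr_mat c x))"
proof -
  assume x: "x \<in> U"
  have "pd_mat c (\<lambda>y. ginv g y ** g y) x = pd_mat c (\<lambda>y. mat 1) x"
    by (rule pd_mat_cong[OF U_open x]) (simp add: ginv_g)
  then have "pd_mat c (ginv g) x ** g x + ginv g x ** pd_mat c g x = 0"
    using pd_mat_mult[OF x smooth_mat_ginv smooth_mat_g] pd_mat_const by simp
  then have e: "pd_mat c (ginv g) x ** g x = - (ginv g x ** pd_mat c g x)"
      by (simp add: eq_neg_iff_add_eq_0)
  have "pd_mat c (ginv g) x = pd_mat c (ginv g) x ** g x ** ginv g x"
      by (simp add: mult_g_ginv_cancel[OF x])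
  also have "\<dots> = - (ginv g x ** pd_mat c g x ** ginv g x)" by (simp add: e matrix_ring_simps)
  also have "\<dots> = - (chr_mat c x ** ginv g x + ginv g x ** transpose (chr_mat c x))"
    by (simp add: pd_mat_g[OF x] matrix_ring_simps mult_g_ginv_cancel[OF x] mult_ginv_g_cancel x
          ginv_g[OF x] algebra_simps)
  finally show ?thesis .
qed

text \<open>\<open>curv c d x $ a $ b\<close> is \<open>R\<^sup>a\<^sub>b\<^sub>c\<^sub>d\<close>, the Riemann tensor in the convention
  \<open>R\<^sub>b\<^sub>d = R\<^sup>a\<^sub>b\<^sub>a\<^sub>d\<close> of \<open>ricci\<close>.\<close>

definition curv :: "'n \<Rightarrow> 'n \<Rightarrow> real^'n \<Rightarrow> real^'n^'n" where
  "curv c d x = pd_mat c (chr_mat d) x - pd_mat d (chr_mat c) x + chr_mat c x ** chr_mat d x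
      - chr_mat d x ** chr_mat c x"

lemma curv_antisym: "curv c d x = - curv d c x"
  unfolding curv_def by (simp add: algebra_simps)

lemma smooth_curv: "smooth_mat_on U (curv c d)"
proof -
  have "smooth_mat_on U
      (\<lambda>x. pd_mat c (chr_mat d) x - pd_mat d (chr_mat c) x + chr_mat c x ** chr_mat d x
        - chr_mat d x ** chr_mat c x)"
    using smooth_chr_mat
    by (intro smooth_mat_on_diff smooth_mat_on_add smooth_mat_on_mult smooth_mat_on_pd_mat
          U_open)
  then show ?thesis unfolding curv_def[abs_def] .
qed

lemma pd_mat_curv: "x \<in> U \<Longrightarrow> pd_mat e (curv c d) x
  = pd_mat e (pd_mat c (chr_mat d)) x - pd_mat e (pd_mat d (chr_mat c)) x
   + pd_mat e (chr_mat c) x ** chr_mat d x + chr_mat c x ** pd_mat e (chr_mat d) x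
       - pd_mat e (chr_mat d) x ** chr_mat c x - chr_mat d x ** pd_mat e (chr_mat c) x"
proof -
  assume x: "x \<in> U"
  note smooth_terms = smooth_chr_mat smooth_mat_on_pd_mat[OF smooth_chr_mat]
      smooth_mat_on_mult[OF U_open smooth_chr_mat smooth_chr_mat]
  have "pd_mat e (curv c d) x
      = pd_mat e (\<lambda>x. pd_mat c (chr_mat d) x - pd_mat d (chr_mat c) x
        + chr_mat c x ** chr_mat d x - chr_mat d x ** chr_mat c x) x"
    unfolding curv_def[abs_def] ..
  also have "\<dots> = pd_mat e
      (\<lambda>x. pd_mat c (chr_mat d) x - pd_mat d (chr_mat c) x + chr_mat c x ** chr_mat d x) x
      - pd_mat e (\<lambda>x. chr_mat d x ** chr_mat c x) x"
    by (rule pd_mat_diff[OF x]) (intro smooth_mat_on_add smooth_mat_on_diff smooth_terms U_open)+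
  also have "pd_mat e (\<lambda>x. pd_mat c (chr_mat d) x - pd_mat d (chr_mat c) x
        + chr_mat c x ** chr_mat d x) x
      = pd_mat e (\<lambda>x. pd_mat c (chr_mat d) x - pd_mat d (chr_mat c) x) x
          + pd_mat e (\<lambda>x. chr_mat c x ** chr_mat d x) x"
    by (rule pd_mat_add[OF x]) (intro smooth_mat_on_add smooth_mat_on_diff smooth_terms U_open)+
  also have "pd_mat e (\<lambda>x. pd_mat c (chr_mat d) x - pd_mat d (chr_mat c) x) x
      = pd_mat e (pd_mat c (chr_mat d)) x - pd_mat e (pd_mat d (chr_mat c)) x"
    by (rule pd_mat_diff[OF x]) (intro smooth_terms)+
  finally show ?thesis
    by (simp add: pd_mat_mult[OF x smooth_chr_mat smooth_chr_mat] algebra_simps)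
qed

text \<open>\<open>cov_curv e c d x $ a $ b\<close> is \<open>\<nabla>\<^sub>e R\<^sup>a\<^sub>b\<^sub>c\<^sub>d\<close>.\<close>

definition cov_curv :: "'n \<Rightarrow> 'n \<Rightarrow> 'n \<Rightarrow> real^'n \<Rightarrow>
  real^'n^'n" where
  "cov_curv e c d x = pd_mat e (curv c d) x + chr_mat e x ** curv c d x - curv c d x ** chr_mat e x
     - (\<Sum>k\<in>UNIV. chr g k e c x *\<^sub>R curv k d x)
         - (\<Sum>k\<in>UNIV. chr g k e d x *\<^sub>R curv c k x)"

lemma second_bianchi: "x \<in> U \<Longrightarrow> cov_curv e c d x + cov_curv c d e x
  + cov_curv d e c x = 0"
proof -
  assume x: "x \<in> U"
  have core: "(pd_mat e (curv c d) x + chr_mat e x ** curv c d x - curv c d x ** chr_mat e x)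
     + (pd_mat c (curv d e) x + chr_mat c x ** curv d e x - curv d e x ** chr_mat c x)
     + (pd_mat d (curv e c) x + chr_mat d x ** curv e c x - curv e c x ** chr_mat d x) = 0"
    unfolding pd_mat_curv[OF x] unfolding curv_def
    by (simp add: pd_mat_commute[OF U_open x smooth_chr_mat] matrix_ring_simps algebra_simps)
  have s1: "(\<Sum>k\<in>UNIV. chr g k e c x *\<^sub>R curv k d x)
      + (\<Sum>k\<in>UNIV. chr g k c e x *\<^sub>R curv d k x) = 0"
    by (simp add: chr_sym[OF x, of _ c e] curv_antisym[of d _ x] sum.distrib[symmetric]
          scaleR_right.sum[symmetric])
  have s2: "(\<Sum>k\<in>UNIV. chr g k e d x *\<^sub>R curv c k x)
      + (\<Sum>k\<in>UNIV. chr g k d e x *\<^sub>R curv k c x) = 0"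
    by (simp add: chr_sym[OF x, of _ d e] curv_antisym[of c _ x] sum.distrib[symmetric])
  have s3: "(\<Sum>k\<in>UNIV. chr g k c d x *\<^sub>R curv k e x)
      + (\<Sum>k\<in>UNIV. chr g k d c x *\<^sub>R curv e k x) = 0"
    by (simp add: chr_sym[OF x, of _ c d] curv_antisym[of e _ x] sum.distrib[symmetric])
  have "cov_curv e c d x + cov_curv c d e x + cov_curv d e c x =
     ((pd_mat e (curv c d) x + chr_mat e x ** curv c d x - curv c d x ** chr_mat e x)
     + (pd_mat c (curv d e) x + chr_mat c x ** curv d e x - curv d e x ** chr_mat c x)
     + (pd_mat d (curv e c) x + chr_mat d x ** curv e c x - curv e c x ** chr_mat d x))
     - ((\<Sum>k\<in>UNIV. chr g k e c x *\<^sub>R curv k d x)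
           + (\<Sum>k\<in>UNIV. chr g k c e x *\<^sub>R curv d k x))
     - ((\<Sum>k\<in>UNIV. chr g k e d x *\<^sub>R curv c k x)
           + (\<Sum>k\<in>UNIV. chr g k d e x *\<^sub>R curv k c x))
     - ((\<Sum>k\<in>UNIV. chr g k c d x *\<^sub>R curv k e x)
           + (\<Sum>k\<in>UNIV. chr g k d c x *\<^sub>R curv e k x))"
    unfolding cov_curv_def by (simp add: algebra_simps)
  then show ?thesis using core s1 s2 s3 by simp
qed

lemma pd_mat_pd_mat_g: "x \<in> U \<Longrightarrow> pd_mat d (pd_mat c g) x
  = transpose (pd_mat d (chr_mat c) x) ** g x + transpose (chr_mat c x) ** pd_mat d g x
   + pd_mat d g x ** chr_mat c x + g x ** pd_mat d (chr_mat c) x"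
proof -
  assume x: "x \<in> U"
  have "pd_mat d (pd_mat c g) x
      = pd_mat d (\<lambda>y. transpose (chr_mat c y) ** g y + g y ** chr_mat c y) x"
    by (rule pd_mat_cong[OF U_open x]) (simp add: pd_mat_g)
  also have "\<dots> = pd_mat d (\<lambda>y. transpose (chr_mat c y) ** g y) x
      + pd_mat d (\<lambda>y. g y ** chr_mat c y) x"
    by (rule pd_mat_add[OF x])
        (intro smooth_mat_on_mult U_open smooth_mat_on_transpose smooth_chr_mat smooth_mat_g)+
  also have "\<dots> = transpose (pd_mat d (chr_mat c) x) ** g x
      + transpose (chr_mat c x) ** pd_mat d g x
   + (pd_mat d g x ** chr_mat c x + g x ** pd_mat d (chr_mat c) x)"
    by (simp add: pd_mat_mult[OF x] smooth_mat_on_transpose smooth_chr_mat smooth_mat_g pd_mat_transpose)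
  finally show ?thesis by (simp add: add.assoc)
qed

lemma g_curv_skew: "x \<in> U \<Longrightarrow> transpose (g x ** curv c d x) = - (g x ** curv c d x)"
  unfolding curv_def
  by (rule metric_curvature_skew_algebraic[OF transpose_g pd_mat_g pd_mat_g pd_mat_pd_mat_g
          pd_mat_pd_mat_g pd_mat_commute[OF U_open _ smooth_mat_g]]) auto

lemma transpose_ginv: "x \<in> U \<Longrightarrow> transpose (ginv g x) = ginv g x"
  using ginv_sym by (simp add: transpose_def vec_eq_iff)

lemma curv_ginv_skew: "x \<in> U \<Longrightarrow> transpose (curv c d x ** ginv g x) =
  - (curv c d x ** ginv g x)"
proof -
  assume x: "x \<in> U"
  have "curv c d x = ginv g x ** (g x ** curv c d x)"
    by (simp add: matrix_mul_assoc ginv_g[OF x])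
  then have "curv c d x ** ginv g x = ginv g x ** (g x ** curv c d x) ** ginv g x" by simp
  moreover have "transpose (ginv g x ** (g x ** curv c d x) ** ginv g x) =
      - (ginv g x ** (g x ** curv c d x) ** ginv g x)"
    using g_curv_skew[OF x, of c d] transpose_ginv[OF x]
    by (simp add: matrix_transpose_mul matrix_ring_simps)
  ultimately show ?thesis by simp
qed

lemma trace_curv: "x \<in> U \<Longrightarrow> (\<Sum>k\<in>UNIV. curv c d x $ k $ k) = 0"
proof -
  assume x: "x \<in> U"
  have "curv c d x = curv c d x ** ginv g x ** g x" by (simp add: mult_ginv_g_cancel[OF x])
  then have "(\<Sum>k\<in>UNIV. curv c d x $ k $ k)
      = (\<Sum>k\<in>UNIV. \<Sum>i\<in>UNIV. (curv c d x ** ginv g x) $ k $ i * g x $ i $ k)"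
    by (metis (no_types, lifting) matrix_matrix_mult_def sum.cong vec_lambda_beta)
  also have "\<dots> = 0" by (rule sum_skew_sym_contraction[OF curv_ginv_skew[OF x] transpose_g[OF x]])
  finally show ?thesis .
qed

lemma pd_chr_sym: "x \<in> U \<Longrightarrow> pd l (chr g k i j) x = pd l (chr g k j i) x"
  by (rule pd_cong[OF U_open]) (auto simp: chr_sym)

lemma ricci_eq_trace_curv: "x \<in> U \<Longrightarrow> ricci g b d x
  = (\<Sum>a\<in>UNIV. curv a d x $ a $ b)"
proof -
  assume x: "x \<in> U"
  have "curv a d x $ a $ b = pd a (chr g a d b) x - pd d (chr g a a b) x
      + (\<Sum>k\<in>UNIV. chr g a a k x * chr g k d b x)
          - (\<Sum>k\<in>UNIV. chr g a d k x * chr g k a b x)" for a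
    by (simp add: curv_def pd_mat_def matrix_matrix_mult_def)
  then have "(\<Sum>a\<in>UNIV. curv a d x $ a $ b) = (\<Sum>a\<in>UNIV. pd a (chr g a d b) x)
      - (\<Sum>a\<in>UNIV. pd d (chr g a a b) x)
      + (\<Sum>a\<in>UNIV. \<Sum>k\<in>UNIV. chr g a a k x * chr g k d b x)
          - (\<Sum>a\<in>UNIV. \<Sum>k\<in>UNIV. chr g a d k x * chr g k a b x)"
    by (simp add: sum_subtractf sum.distrib)
  moreover have "ricci g b d x = (\<Sum>a\<in>UNIV. pd a (chr g a b d) x)
      - (\<Sum>a\<in>UNIV. pd d (chr g a b a) x)
      + (\<Sum>a\<in>UNIV. \<Sum>k\<in>UNIV. chr g a a k x * chr g k b d x)
          - (\<Sum>a\<in>UNIV. \<Sum>k\<in>UNIV. chr g a d k x * chr g k b a x)"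
    by (simp add: ricci_def sum_subtractf sum.distrib)
  moreover have "(\<Sum>a\<in>UNIV. pd a (chr g a b d) x) = (\<Sum>a\<in>UNIV. pd a (chr g a d b) x)"
    by (rule sum.cong[OF refl]) (rule pd_chr_sym[OF x])
  moreover have "(\<Sum>a\<in>UNIV. pd d (chr g a b a) x) = (\<Sum>a\<in>UNIV. pd d (chr g a a b) x)"
    by (rule sum.cong[OF refl]) (rule pd_chr_sym[OF x])
  moreover have "(\<Sum>a\<in>UNIV. \<Sum>k\<in>UNIV. chr g a a k x * chr g k b d x)
      = (\<Sum>a\<in>UNIV. \<Sum>k\<in>UNIV. chr g a a k x * chr g k d b x)"
    by (intro sum.cong refl) (simp add: chr_sym[OF x, of _ b d])
  moreover have "(\<Sum>a\<in>UNIV. \<Sum>k\<in>UNIV. chr g a d k x * chr g k b a x)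
      = (\<Sum>a\<in>UNIV. \<Sum>k\<in>UNIV. chr g a d k x * chr g k a b x)"
    by (intro sum.cong refl) (simp add: chr_sym[OF x, of _ b])
  ultimately show ?thesis by simp
qed

lemma sum_chr_mult_chr_swap: "(\<Sum>k\<in>UNIV. \<Sum>l\<in>UNIV. chr g k d l x * chr g l b k x)
  = (\<Sum>k\<in>UNIV. \<Sum>l\<in>UNIV. chr g k b l x * chr g l d k x)"
  by (subst sum.swap) (simp add: mult.commute)

lemma ricci_sym: "x \<in> U \<Longrightarrow> ricci g b d x = ricci g d b x"
proof -
  assume x: "x \<in> U"
  have e: "ricci g b d x = (\<Sum>k\<in>UNIV. pd k (chr g k b d) x)
      - (\<Sum>k\<in>UNIV. pd d (chr g k b k) x)
      + (\<Sum>k\<in>UNIV. \<Sum>l\<in>UNIV. chr g k k l x * chr g l b d x)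
          - (\<Sum>k\<in>UNIV. \<Sum>l\<in>UNIV. chr g k d l x * chr g l b k x)" for b d
    by (simp add: ricci_def sum_subtractf sum.distrib)
  have t: "(\<Sum>k\<in>UNIV. curv d b x $ k $ k) = (\<Sum>k\<in>UNIV. pd d (chr g k b k) x)
      - (\<Sum>k\<in>UNIV. pd b (chr g k d k) x)
      + (\<Sum>k\<in>UNIV. \<Sum>l\<in>UNIV. chr g k d l x * chr g l b k x)
          - (\<Sum>k\<in>UNIV. \<Sum>l\<in>UNIV. chr g k b l x * chr g l d k x)"
    by (simp add: curv_def pd_mat_def matrix_matrix_mult_def sum_subtractf sum.distrib)
  have a: "(\<Sum>k\<in>UNIV. pd k (chr g k b d) x) = (\<Sum>k\<in>UNIV. pd k (chr g k d b) x)"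
    by (rule sum.cong[OF refl]) (rule pd_chr_sym[OF x])
  have b: "(\<Sum>k\<in>UNIV. \<Sum>l\<in>UNIV. chr g k k l x * chr g l b d x)
      = (\<Sum>k\<in>UNIV. \<Sum>l\<in>UNIV. chr g k k l x * chr g l d b x)"
    by (intro sum.cong refl) (simp add: chr_sym[OF x, of _ b d])
  show ?thesis using e[of b d] e[of d b] t trace_curv[OF x, of d b] a b sum_chr_mult_chr_swap[of d x b]
      by linarith
qed

lemma trace_cov_curv: "x \<in> U \<Longrightarrow> (\<Sum>a\<in>UNIV. cov_curv e a d x $ a $ b)
  = cov2 g (\<lambda>y p q. ricci g p q y) e b d x"
proof -
  assume x: "x \<in> U"
  have c: "cov_curv e a d x $ a $ b = pd e (\<lambda>y. curv a d y $ a $ b) x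
      + (\<Sum>k\<in>UNIV. chr g a e k x * curv a d x $ k $ b)
     - (\<Sum>k\<in>UNIV. curv a d x $ a $ k * chr g k e b x)
         - (\<Sum>k\<in>UNIV. chr g k e a x * curv k d x $ a $ b)
     - (\<Sum>k\<in>UNIV. chr g k e d x * curv a k x $ a $ b)" for a
    by (simp add: cov_curv_def pd_mat_def matrix_matrix_mult_def sum_component)
  have p1: "(\<Sum>a\<in>UNIV. pd e (\<lambda>y. curv a d y $ a $ b) x)
      = pd e (\<lambda>y. ricci g b d y) x"
  proof -
    have "(\<Sum>a\<in>UNIV. pd e (\<lambda>y. curv a d y $ a $ b) x)
        = pd e (\<lambda>y. \<Sum>a\<in>UNIV. curv a d y $ a $ b) x"
      by (rule pd_sum[symmetric]) (auto intro: smooth_mat_on_differentiable[OF smooth_curv x])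
    also have "\<dots> = pd e (\<lambda>y. ricci g b d y) x"
      by (rule pd_cong[OF U_open x]) (simp add: ricci_eq_trace_curv)
    finally show ?thesis .
  qed
  have p2: "(\<Sum>a\<in>UNIV. \<Sum>k\<in>UNIV. chr g a e k x * curv a d x $ k $ b)
      = (\<Sum>a\<in>UNIV. \<Sum>k\<in>UNIV. chr g k e a x * curv k d x $ a $ b)"
    by (rule sum.swap)
  have p3: "(\<Sum>a\<in>UNIV. \<Sum>k\<in>UNIV. curv a d x $ a $ k * chr g k e b x)
      = (\<Sum>k\<in>UNIV. chr g k e b x * ricci g k d x)"
    by (subst sum.swap) (simp add: ricci_eq_trace_curv[OF x] sum_distrib_left mult.commute)
  have p4: "(\<Sum>a\<in>UNIV. \<Sum>k\<in>UNIV. chr g k e d x * curv a k x $ a $ b)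
      = (\<Sum>k\<in>UNIV. chr g k e d x * ricci g b k x)"
    by (subst sum.swap) (simp add: ricci_eq_trace_curv[OF x] sum_distrib_left)
  have "(\<Sum>a\<in>UNIV. cov_curv e a d x $ a $ b)
      = (\<Sum>a\<in>UNIV. pd e (\<lambda>y. curv a d y $ a $ b) x)
     + (\<Sum>a\<in>UNIV. \<Sum>k\<in>UNIV. chr g a e k x * curv a d x $ k $ b)
     - (\<Sum>a\<in>UNIV. \<Sum>k\<in>UNIV. curv a d x $ a $ k * chr g k e b x)
         - (\<Sum>a\<in>UNIV. \<Sum>k\<in>UNIV. chr g k e a x * curv k d x $ a $ b)
     - (\<Sum>a\<in>UNIV. \<Sum>k\<in>UNIV. chr g k e d x * curv a k x $ a $ b)"
    unfolding c by (simp add: sum_subtractf sum.distrib)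
  then show ?thesis unfolding cov2_def using p1 p2 p3 p4 by simp
qed

lemma curv_fun_antisym: "curv e a = (\<lambda>y. - curv a e y)"
  by (rule ext) (rule curv_antisym)

lemma cov_curv_antisym: "x \<in> U \<Longrightarrow> cov_curv d e a x = - cov_curv d a e x"
proof -
  assume x: "x \<in> U"
  have "pd_mat d (curv e a) x = - pd_mat d (curv a e) x"
    by (subst curv_fun_antisym) (rule pd_mat_uminus[OF x smooth_curv])
  moreover have "(\<Sum>k\<in>UNIV. chr g k d e x *\<^sub>R curv k a x) =
      - (\<Sum>k\<in>UNIV. chr g k d e x *\<^sub>R curv a k x)"
    by (simp add: curv_antisym[of _ a x] sum_negf)
  moreover have "(\<Sum>k\<in>UNIV. chr g k d a x *\<^sub>R curv e k x) =
      - (\<Sum>k\<in>UNIV. chr g k d a x *\<^sub>R curv k e x)"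
    by (simp add: curv_antisym[of e _ x] sum_negf)
  moreover have "curv e a x = - curv a e x" by (rule curv_antisym)
  ultimately show ?thesis unfolding cov_curv_def by (simp add: matrix_ring_simps algebra_simps)
qed

lemma trace_curv_ginv: "x \<in> U
  \<Longrightarrow> (\<Sum>e\<in>UNIV. (curv d e x ** ginv g x) $ a $ e)
  = (\<Sum>b\<in>UNIV. ginv g x $ a $ b * ricci g b d x)"
proof -
  assume x: "x \<in> U"
  have t: "(curv d e x ** ginv g x) $ a $ e = - (curv d e x ** ginv g x) $ e $ a" for e
  proof -
    have "transpose (curv d e x ** ginv g x) $ e $ a = (- (curv d e x ** ginv g x)) $ e $ a"
      using curv_ginv_skew[OF x] by simp
    then show ?thesis by (simp add: transpose_def)
  qed
  have "(\<Sum>e\<in>UNIV. (curv d e x ** ginv g x) $ a $ e) =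
      - (\<Sum>e\<in>UNIV. \<Sum>b\<in>UNIV. curv d e x $ e $ b * ginv g x $ b $ a)"
  proof -
    have "(\<Sum>e\<in>UNIV. (curv d e x ** ginv g x) $ a $ e)
        = (\<Sum>e\<in>UNIV. - (curv d e x ** ginv g x) $ e $ a)"
      by (rule sum.cong[OF refl]) (rule t)
    then show ?thesis by (simp add: sum_negf matrix_matrix_mult_def)
  qed
  also have "\<dots> = (\<Sum>e\<in>UNIV. \<Sum>b\<in>UNIV. curv e d x $ e $ b * ginv g x $ b $ a)"
    by (simp add: curv_antisym[of d _ x] sum_negf)
  also have "\<dots> = (\<Sum>b\<in>UNIV. ginv g x $ a $ b * ricci g b d x)"
    by (subst sum.swap) (simp add: ricci_eq_trace_curv[OF x] sum_distrib_left sum_distrib_right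
          ginv_sym[OF x, of b a for b] mult.commute)
  finally show ?thesis .
qed

text \<open>The divergence \<open>\<nabla>\<^sub>a Q\<^sup>a\<^sub>d\<close> of a (1,1)-tensor field with components \<open>Q y a d\<close>.\<close>

definition div_tensor :: "(real^'n \<Rightarrow> 'n \<Rightarrow> 'n \<Rightarrow> real)
  \<Rightarrow> 'n \<Rightarrow> real^'n \<Rightarrow> real" where
  "div_tensor Q d x = (\<Sum>a\<in>UNIV. pd a (\<lambda>y. Q y a d) x)
      + (\<Sum>a\<in>UNIV. \<Sum>k\<in>UNIV. chr g a a k x * Q x k d)
     - (\<Sum>a\<in>UNIV. \<Sum>k\<in>UNIV. chr g k a d x * Q x a k)"

lemma div_tensor_cong: "x \<in> U
  \<Longrightarrow> (\<And>y a d. y \<in> U \<Longrightarrow> Q y a d = Q' y a d)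
  \<Longrightarrow> div_tensor Q d x = div_tensor Q' d x"
  unfolding div_tensor_def
  by (simp add: pd_cong[OF U_open, of x "\<lambda>y. Q y _ d" "\<lambda>y. Q' y _ d"])

lemma trace_cov_curv_ginv: "x \<in> U
  \<Longrightarrow> (\<Sum>a\<in>UNIV. \<Sum>e\<in>UNIV. (cov_curv a d e x ** ginv g x) $ a $ e)
   = div_tensor (\<lambda>y a d. \<Sum>e\<in>UNIV. (curv d e y ** ginv g y) $ a $ e) d x"
proof -
  assume x: "x \<in> U"
  let ?H = "ginv g x"
  have m: "cov_curv a d e x ** ?H = pd_mat a (\<lambda>y. curv d e y ** ginv g y) x
      + chr_mat a x ** (curv d e x ** ?H)
     + curv d e x ** ?H ** transpose (chr_mat a x)
         - (\<Sum>k\<in>UNIV. chr g k a d x *\<^sub>R (curv k e x ** ?H))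
     - (\<Sum>k\<in>UNIV. chr g k a e x *\<^sub>R (curv d k x ** ?H))" for a e
    unfolding cov_curv_def pd_mat_mult[OF x smooth_curv smooth_mat_ginv] pd_mat_ginv[OF x]
    by (simp add: matrix_ring_simps matrix_mul_sum_left algebra_simps)
  have t1: "(\<Sum>e\<in>UNIV. pd_mat a (\<lambda>y. curv d e y ** ginv g y) x $ a $ e)
      = pd a (\<lambda>y. \<Sum>e\<in>UNIV. (curv d e y ** ginv g y) $ a $ e) x" for a
    unfolding pd_mat_def
    by (simp add: pd_sum
          smooth_mat_on_differentiable[OF
          smooth_mat_on_mult[OF U_open smooth_curv smooth_mat_ginv] x])
  have t2: "(\<Sum>e\<in>UNIV. (chr_mat a x ** (curv d e x ** ?H)) $ a $ e)
     = (\<Sum>k\<in>UNIV. chr g a a k x * (\<Sum>e\<in>UNIV. (curv d e x ** ?H) $ k $ e))" for a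
    by (simp add: matrix_matrix_mult_def[of "chr_mat _ x"] sum_distrib_left) (rule sum.swap)
  have t3: "(\<Sum>e\<in>UNIV. (curv d e x ** ?H ** transpose (chr_mat a x)) $ a $ e)
      = (\<Sum>e\<in>UNIV. \<Sum>k\<in>UNIV. (chr g k a e x *\<^sub>R (curv d k x ** ?H)) $ a $ e)" for a
    by (simp add: matrix_mul_transpose_nth sum_component mult.commute) (rule sum.swap)
  have t4: "(\<Sum>e\<in>UNIV. \<Sum>k\<in>UNIV. (chr g k a d x *\<^sub>R (curv k e x ** ?H)) $ a $ e)
     = (\<Sum>k\<in>UNIV. chr g k a d x * (\<Sum>e\<in>UNIV. (curv k e x ** ?H) $ a $ e))" for a
    by (simp add: sum_component sum_distrib_left) (rule sum.swap)
  show ?thesis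
    unfolding div_tensor_def m
    by (simp add: sum_subtractf sum.distrib t1 t2 t3 t4 sum_component del: vector_scaleR_component)
qed

lemma smooth_ricci: "smooth_on U (\<lambda>y. ricci g b d y)"
  unfolding ricci_def using smooth_chr U_open
  by (intro smooth_on_add smooth_on_sum smooth_on_diff smooth_on_mult smooth_on_pd U_open) auto

lemma pd_ginv: "x \<in> U \<Longrightarrow> pd a (\<lambda>y. ginv g y $ i $ j) x =
   - ((\<Sum>k\<in>UNIV. chr g i a k x * ginv g x $ k $ j)
         + (\<Sum>k\<in>UNIV. ginv g x $ i $ k * chr g j a k x))"
proof -
  assume x: "x \<in> U"
  have "pd a (\<lambda>y. ginv g y $ i $ j) x = pd_mat a (ginv g) x $ i $ j" by (simp add: pd_mat_def)
  then show ?thesis by (simp add: pd_mat_ginv[OF x] matrix_matrix_mult_def transpose_def)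
qed

lemma div_raised_ricci: "x \<in> U
  \<Longrightarrow> div_tensor
  (\<lambda>y a d. \<Sum>b\<in>UNIV. ginv g y $ a $ b * ricci g b d y) d x
   = (\<Sum>a\<in>UNIV. \<Sum>f\<in>UNIV. ginv g x $ a $ f
         * cov2 g (\<lambda>y p q. ricci g p q y) a f d x)"
proof -
  assume x: "x \<in> U"
  let ?h = "\<lambda>i j. ginv g x $ i $ j" and ?R = "\<lambda>i j. ricci g i j x"
  have p: "pd a (\<lambda>y. \<Sum>b\<in>UNIV. ginv g y $ a $ b * ricci g b d y) x
     = (\<Sum>b\<in>UNIV. pd a (\<lambda>y. ginv g y $ a $ b) x * ?R b d
           + ?h a b * pd a (\<lambda>y. ricci g b d y) x)" for a
    by (simp add: pd_sum pd_mult smooth_on_differentiable[OF smooth_ginv x]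
          smooth_on_differentiable[OF smooth_ricci x] differentiable_mult)
  define A1 where "A1 =
      (\<Sum>a\<in>UNIV. \<Sum>b\<in>UNIV. \<Sum>k\<in>UNIV. chr g a a k x * ?h k b * ?R b d)"
  define B where "B = (\<Sum>a\<in>UNIV. \<Sum>b\<in>UNIV. \<Sum>k\<in>UNIV. ?h a k * chr g b a k x
        * ?R b d)"
  define P where "P = (\<Sum>a\<in>UNIV. \<Sum>b\<in>UNIV. ?h a b * pd a (\<lambda>y. ricci g b d y) x)"
  have e1: "(\<Sum>a\<in>UNIV. pd a
        (\<lambda>y. \<Sum>b\<in>UNIV. ginv g y $ a $ b * ricci g b d y) x) = - A1 - B + P"
    unfolding p pd_ginv[OF x] A1_def B_def P_def
    by (simp add: sum.distrib sum_subtractf sum_negf sum_distrib_left sum_distrib_right ring_distribs)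
  have e2: "(\<Sum>a\<in>UNIV. \<Sum>k\<in>UNIV. chr g a a k x
        * (\<Sum>b\<in>UNIV. ?h k b * ?R b d)) = A1"
    unfolding A1_def by (rule sum.cong[OF refl]) (simp add: sum_distrib_left mult.assoc, rule sum.swap)
  have e3: "(\<Sum>a\<in>UNIV. \<Sum>k\<in>UNIV. chr g k a d x * (\<Sum>b\<in>UNIV. ?h a b * ?R b k))
      = (\<Sum>a\<in>UNIV. \<Sum>f\<in>UNIV. \<Sum>k\<in>UNIV. ?h a f * chr g k a d x * ?R f k)"
    by (rule sum.cong[OF refl]) (simp add: sum_distrib_left mult_ac, rule sum.swap)
  have e4: "B = (\<Sum>a\<in>UNIV. \<Sum>f\<in>UNIV. \<Sum>k\<in>UNIV. ?h a f * chr g k a f x * ?R k d)"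
    unfolding B_def by (rule sum.cong[OF refl]) (rule sum.swap)
  have rhs: "(\<Sum>a\<in>UNIV. \<Sum>f\<in>UNIV. ?h a f
        * cov2 g (\<lambda>y p q. ricci g p q y) a f d x)
     = P - (\<Sum>a\<in>UNIV. \<Sum>f\<in>UNIV. \<Sum>k\<in>UNIV. ?h a f * chr g k a f x * ?R k d)
       - (\<Sum>a\<in>UNIV. \<Sum>f\<in>UNIV. \<Sum>k\<in>UNIV. ?h a f * chr g k a d x * ?R f k)"
    unfolding cov2_def P_def
    by (simp add: sum.distrib sum_subtractf sum_distrib_left ring_distribs mult_ac)
  show ?thesis
    unfolding div_tensor_def e1 rhs using e2 e3 e4 by simp
qed

abbreviation "cov_ricci e b d x \<equiv> cov2 g (\<lambda>y p q. ricci g p q y) e b d x"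

lemma cov_ricci_sym: "x \<in> U \<Longrightarrow> cov_ricci e b a x = cov_ricci e a b x"
proof -
  assume x: "x \<in> U"
  have "pd e (\<lambda>y. ricci g b a y) x = pd e (\<lambda>y. ricci g a b y) x"
    by (rule pd_cong[OF U_open x]) (simp add: ricci_sym)
  then show ?thesis unfolding cov2_def using ricci_sym[OF x] by (simp add: algebra_simps)
qed

lemma second_bianchi_traced: "x \<in> U \<Longrightarrow> cov_ricci e b d x
  + (\<Sum>a\<in>UNIV. cov_curv a d e x $ a $ b) - cov_ricci d b e x = 0"
proof -
  assume x: "x \<in> U"
  have "(\<Sum>a\<in>UNIV. (cov_curv e a d x + cov_curv a d e x + cov_curv d e a x) $ a $ b) = 0"
    using second_bianchi[OF x] by simp
  moreover have "(\<Sum>a\<in>UNIV. cov_curv d e a x $ a $ b) = - cov_ricci d b e x"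
    using trace_cov_curv[OF x, of d e b] by (simp add: cov_curv_antisym[OF x, of d e] sum_negf)
  ultimately show ?thesis using trace_cov_curv[OF x, of e d b] by (simp add: sum.distrib)
qed

lemma contract_trace_cov_curv:
  assumes x: "x \<in> U"
  shows "(\<Sum>b\<in>UNIV. \<Sum>e\<in>UNIV. ginv g x $ b $ e * (\<Sum>a\<in>UNIV. cov_curv a d e x $ a $ b))
    = (\<Sum>a\<in>UNIV. \<Sum>f\<in>UNIV. ginv g x $ a $ f * cov_ricci a f d x)"
proof -
  let ?h = "\<lambda>i j. ginv g x $ i $ j"
  have "(\<Sum>b\<in>UNIV. \<Sum>e\<in>UNIV. ?h b e * (\<Sum>a\<in>UNIV. cov_curv a d e x $ a $ b))
      = (\<Sum>e\<in>UNIV. \<Sum>b\<in>UNIV. \<Sum>a\<in>UNIV. cov_curv a d e x $ a $ b * ?h b e)"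
    by (subst sum.swap) (simp add: sum_distrib_left mult.commute)
  also have "\<dots> = (\<Sum>e\<in>UNIV. \<Sum>a\<in>UNIV. \<Sum>b\<in>UNIV. cov_curv a d e x $ a $ b * ?h b e)"
    by (rule sum.cong[OF refl]) (rule sum.swap)
  also have "\<dots> = (\<Sum>a\<in>UNIV. \<Sum>e\<in>UNIV. (cov_curv a d e x ** ginv g x) $ a $ e)"
    by (subst sum.swap) (simp add: matrix_matrix_mult_def)
  also have "\<dots> = div_tensor (\<lambda>y a d. \<Sum>e\<in>UNIV. (curv d e y ** ginv g y) $ a $ e) d x"
    by (rule trace_cov_curv_ginv[OF x])
  also have "\<dots> = div_tensor (\<lambda>y a d. \<Sum>b\<in>UNIV. ginv g y $ a $ b * ricci g b d y) d x"
    by (rule div_tensor_cong[OF x]) (rule trace_curv_ginv)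
  also have "\<dots> = (\<Sum>a\<in>UNIV. \<Sum>f\<in>UNIV. ?h a f * cov_ricci a f d x)"
    by (rule div_raised_ricci[OF x])
  finally show ?thesis .
qed

lemma contracted_bianchi: "x \<in> U \<Longrightarrow>
  (\<Sum>b\<in>UNIV. \<Sum>c\<in>UNIV. ginv g x $ b $ c * cov_ricci c a b x)
      = (1/2) * (\<Sum>b\<in>UNIV. \<Sum>c\<in>UNIV. ginv g x $ b $ c * cov_ricci a b c x)"
proof -
  assume x: "x \<in> U"
  let ?h = "\<lambda>i j. ginv g x $ i $ j"
  note w = contract_trace_cov_curv[OF x]
  have s: "(\<Sum>b\<in>UNIV. \<Sum>e\<in>UNIV. ?h b e * cov_ricci e b d x)
      + (\<Sum>b\<in>UNIV. \<Sum>e\<in>UNIV. ?h b e * (\<Sum>a\<in>UNIV. cov_curv a d e x $ a $ b))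
     - (\<Sum>b\<in>UNIV. \<Sum>e\<in>UNIV. ?h b e * cov_ricci d b e x) = 0" for d
  proof -
    have "(\<Sum>b\<in>UNIV. \<Sum>e\<in>UNIV. ?h b e
          * (cov_ricci e b d x + (\<Sum>a\<in>UNIV. cov_curv a d e x $ a $ b)
          - cov_ricci d b e x)) = 0"
      by (simp add: second_bianchi_traced[OF x])
    then show ?thesis by (simp add: ring_distribs sum.distrib sum_subtractf)
  qed
  have r: "(\<Sum>a\<in>UNIV. \<Sum>f\<in>UNIV. ?h a f * cov_ricci a f d x)
      = (\<Sum>b\<in>UNIV. \<Sum>e\<in>UNIV. ?h b e * cov_ricci e b d x)" for d
    by (subst sum.swap) (simp add: ginv_sym[OF x, of _ b for b])
  have "2 * (\<Sum>b\<in>UNIV. \<Sum>e\<in>UNIV. ?h b e * cov_ricci e b a x)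
      = (\<Sum>b\<in>UNIV. \<Sum>e\<in>UNIV. ?h b e * cov_ricci a b e x)"
    using s[of a] w[of a] r[of a] by simp
  moreover have "(\<Sum>b\<in>UNIV. \<Sum>e\<in>UNIV. ?h b e * cov_ricci e b a x)
      = (\<Sum>b\<in>UNIV. \<Sum>c\<in>UNIV. ?h b c * cov_ricci c a b x)"
    by (simp add: cov_ricci_sym[OF x, of _ _ a])
  ultimately show ?thesis by simp
qed

definition cov_vec :: "'n \<Rightarrow> (real^'n \<Rightarrow> real^'n) \<Rightarrow> real^'n
  \<Rightarrow> real^'n" where
  "cov_vec a w x = pd_vec a w x - w x v* chr_mat a x"

lemma cov1_eq_cov_vec: "cov1 g w a b x = cov_vec a w x $ b"
  by (simp add: cov1_def cov_vec_def pd_vec_def vector_matrix_mult_nth mult.commute)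

lemma cov2_cov1_eq_cov_vec: "cov2 g (\<lambda>y p q. cov1 g w p q y) c a b x
   = (pd_vec c (cov_vec a w) x - cov_vec a w x v* chr_mat c x
         - (\<Sum>k\<in>UNIV. chr g k c a x *\<^sub>R cov_vec k w x)) $ b"
  by (simp add: cov2_def cov1_eq_cov_vec pd_vec_def vector_matrix_mult_nth sum_component mult.commute)

lemma ricci_identity: "x \<in> U \<Longrightarrow> smooth_vec_on U w \<Longrightarrow>
   cov2 g (\<lambda>y p q. cov1 g w p q y) c a b x
       - cov2 g (\<lambda>y p q. cov1 g w p q y) a c b x = - (w x v* curv c a x) $ b"
proof -
  assume x: "x \<in> U" and w: "smooth_vec_on U w"
  have dd: "pd_vec c (cov_vec a w) x = pd_vec c (pd_vec a w) x
      - (pd_vec c w x v* chr_mat a x + w x v* pd_mat c (chr_mat a) x)" for c a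
    unfolding cov_vec_def[abs_def]
    by (simp add: pd_vec_diff[OF x] smooth_vec_on_pd_vec w smooth_vec_on_vector_matrix_mult
          U_open smooth_chr_mat pd_vec_vector_matrix_mult[OF x w smooth_chr_mat])
  have sw: "pd_vec c (pd_vec a w) x = pd_vec a (pd_vec c w) x"
    using w unfolding pd_vec_def smooth_vec_on_def
    by (simp add: vec_eq_iff smooth_on_pd_commute[OF U_open x])
  have cs: "(\<Sum>k\<in>UNIV. chr g k c a x *\<^sub>R cov_vec k w x)
      = (\<Sum>k\<in>UNIV. chr g k a c x *\<^sub>R cov_vec k w x)"
    by (simp add: chr_sym[OF x, of _ c a])
  have "(pd_vec c (cov_vec a w) x - cov_vec a w x v* chr_mat c x
        - (\<Sum>k\<in>UNIV. chr g k c a x *\<^sub>R cov_vec k w x))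
     - (pd_vec a (cov_vec c w) x - cov_vec c w x v* chr_mat a x
           - (\<Sum>k\<in>UNIV. chr g k a c x *\<^sub>R cov_vec k w x)) = - (w x v* curv c a x)"
    unfolding dd cs sw unfolding cov_vec_def curv_def
    by (simp add: algebra_simps vector_matrix_mul_assoc)
  then have "(pd_vec c (cov_vec a w) x - cov_vec a w x v* chr_mat c x
        - (\<Sum>k\<in>UNIV. chr g k c a x *\<^sub>R cov_vec k w x)) $ b
     - (pd_vec a (cov_vec c w) x - cov_vec c w x v* chr_mat a x
           - (\<Sum>k\<in>UNIV. chr g k a c x *\<^sub>R cov_vec k w x)) $ b
         = (- (w x v* curv c a x)) $ b"
    by (simp only: vector_minus_component[symmetric])
  then show ?thesis unfolding cov2_cov1_eq_cov_vec by simp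
qed

lemma smooth_tensor_on_cov1: "smooth_vec_on U w
  \<Longrightarrow> smooth_tensor_on U (\<lambda>y p q. cov1 g w p q y)"
  unfolding smooth_tensor_on_def smooth_vec_on_def cov1_def using smooth_chr
  by (auto intro!: smooth_on_diff smooth_on_sum smooth_on_mult smooth_on_pd U_open)

lemma cov2_cong: "x \<in> U
  \<Longrightarrow> (\<And>y p q. y \<in> U \<Longrightarrow> T y p q = T' y p q)
  \<Longrightarrow> cov2 g T c i j x = cov2 g T' c i j x"
proof -
  assume x: "x \<in> U" and e: "\<And>y p q. y \<in> U \<Longrightarrow> T y p q = T' y p q"
  have "pd c (\<lambda>y. T y i j) x = pd c (\<lambda>y. T' y i j) x"
      by (rule pd_cong[OF U_open x]) (simp add: e)
  then show ?thesis unfolding cov2_def using e[OF x] by simp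
qed

lemma cov2_add: "x \<in> U \<Longrightarrow> smooth_tensor_on U T1
  \<Longrightarrow> smooth_tensor_on U T2 \<Longrightarrow>
  cov2 g (\<lambda>y p q. T1 y p q + T2 y p q) c i j x = cov2 g T1 c i j x + cov2 g T2 c i j x"
  unfolding cov2_def by (simp add: pd_add smooth_tensor_on_differentiable ring_distribs sum.distrib)

lemma cov2_mult_fun: "x \<in> U \<Longrightarrow> smooth_on U f
  \<Longrightarrow> smooth_tensor_on U T \<Longrightarrow>
  cov2 g (\<lambda>y p q. f y * T y p q) c i j x = pd c f x * T x i j + f x * cov2 g T c i j x"
  unfolding cov2_def by
      (simp add: pd_mult smooth_tensor_on_differentiable smooth_on_differentiable ring_distribs
        sum_distrib_left sum_subtractf mult_ac)

lemma cov2_tensor_product: "x \<in> U \<Longrightarrow> smooth_vec_on U u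
  \<Longrightarrow> smooth_vec_on U v \<Longrightarrow>
  cov2 g (\<lambda>y p q. u y $ p * v y $ q) c i j x = cov1 g u c i x * v x $ j
      + u x $ i * cov1 g v c j x"
  unfolding cov2_def cov1_def
  by (simp add: pd_mult smooth_vec_on_differentiable ring_distribs sum_distrib_left
        sum_distrib_right sum_subtractf mult_ac)

lemma cov2_symmetrize: "x \<in> U \<Longrightarrow> smooth_tensor_on U T \<Longrightarrow>
  cov2 g (\<lambda>y p q. (T y p q + T y q p) / 2) c i j x = (cov2 g T c i j x + cov2 g T c j i x) / 2"
proof -
  assume x: "x \<in> U" and T: "smooth_tensor_on U T"
  have T': "smooth_tensor_on U (\<lambda>y p q. T y q p)" using T unfolding smooth_tensor_on_def by auto
  have "cov2 g (\<lambda>y p q. (T y p q + T y q p) / 2) c i j x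
      = cov2 g (\<lambda>y p q. (1/2) * (T y p q + T y q p)) c i j x"
    by simp
  also have "\<dots> = (1/2) * cov2 g (\<lambda>y p q. T y p q + T y q p) c i j x"
    using cov2_mult_fun[OF x, of "\<lambda>_. 1/2" "\<lambda>y p q. T y p q + T y q p" c i j] T T' U_open
    by (simp add: pd_const smooth_tensor_on_def smooth_on_add)
  also have "\<dots> = (1/2) * (cov2 g T c i j x + cov2 g (\<lambda>y p q. T y q p) c i j x)"
    using cov2_add[OF x T T'] by simp
  also have "cov2 g (\<lambda>y p q. T y q p) c i j x = cov2 g T c j i x"
    by (rule cov2_transpose)
  finally show ?thesis by simp
qed

lemma cov2_g: "x \<in> U \<Longrightarrow> cov2 g (\<lambda>y p q. g y $ p $ q) c i j x = 0"
  unfolding cov2_def using pd_g_eq_chr[of x c i j] g_sym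
  by (simp add: mult.commute)

lemma pd_contract_ginv: "x \<in> U \<Longrightarrow> smooth_tensor_on U T \<Longrightarrow>
  pd a (\<lambda>y. \<Sum>b\<in>UNIV. \<Sum>c\<in>UNIV. ginv g y $ b $ c * T y b c) x
   = (\<Sum>b\<in>UNIV. \<Sum>c\<in>UNIV. ginv g x $ b $ c * cov2 g T a b c x)"
proof -
  assume x: "x \<in> U" and T: "smooth_tensor_on U T"
  let ?h = "\<lambda>b c. ginv g x $ b $ c"
  have dT: "\<And>b c. (\<lambda>y. T y b c) differentiable (at x)"
      using smooth_tensor_on_differentiable[OF T x] .
  have dh: "\<And>b c. (\<lambda>y. ginv g y $ b $ c) differentiable (at x)"
      using smooth_on_differentiable[OF smooth_ginv x] .
  have l: "pd a (\<lambda>y. \<Sum>b\<in>UNIV. \<Sum>c\<in>UNIV. ginv g y $ b $ c * T y b c) x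
     = (\<Sum>b\<in>UNIV. \<Sum>c\<in>UNIV. ?h b c * pd a (\<lambda>y. T y b c) x)
       - (\<Sum>b\<in>UNIV. \<Sum>c\<in>UNIV. \<Sum>k\<in>UNIV. chr g b a k x * ?h k c * T x b c)
       - (\<Sum>b\<in>UNIV. \<Sum>c\<in>UNIV. \<Sum>k\<in>UNIV. ?h b k * chr g c a k x * T x b c)"
    by (simp add: pd_sum pd_mult dT dh differentiable_mult differentiable_sum pd_ginv[OF x]
        ring_distribs sum.distrib sum_subtractf sum_distrib_left sum_distrib_right sum_negf mult_ac)
  have r: "(\<Sum>b\<in>UNIV. \<Sum>c\<in>UNIV. ?h b c * cov2 g T a b c x)
     = (\<Sum>b\<in>UNIV. \<Sum>c\<in>UNIV. ?h b c * pd a (\<lambda>y. T y b c) x)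
       - (\<Sum>b\<in>UNIV. \<Sum>c\<in>UNIV. \<Sum>k\<in>UNIV. ?h b c * chr g k a b x * T x k c)
       - (\<Sum>b\<in>UNIV. \<Sum>c\<in>UNIV. \<Sum>k\<in>UNIV. ?h b c * chr g k a c x * T x b k)"
    unfolding cov2_def by (simp add: ring_distribs sum.distrib sum_subtractf sum_distrib_left mult_ac)
  have e1: "(\<Sum>b\<in>UNIV. \<Sum>c\<in>UNIV. \<Sum>k\<in>UNIV. chr g b a k x * ?h k c * T x b c)
      = (\<Sum>b\<in>UNIV. \<Sum>c\<in>UNIV. \<Sum>k\<in>UNIV. ?h b c * chr g k a b x * T x k c)"
    by (subst sum_swap_outer) (simp add: mult_ac)
  have e2: "(\<Sum>b\<in>UNIV. \<Sum>c\<in>UNIV. \<Sum>k\<in>UNIV. ?h b k * chr g c a k x * T x b c)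
      = (\<Sum>b\<in>UNIV. \<Sum>c\<in>UNIV. \<Sum>k\<in>UNIV. ?h b c * chr g k a c x * T x b k)"
    by (rule sum.cong[OF refl]) (subst sum.swap, simp add: mult_ac)
  show ?thesis using l r e1 e2 by simp
qed

lemma smooth_contract_ginv: "smooth_tensor_on U T
  \<Longrightarrow> smooth_on U
  (\<lambda>y. \<Sum>b\<in>UNIV. \<Sum>c\<in>UNIV. ginv g y $ b $ c * T y b c)"
  using smooth_ginv U_open unfolding smooth_tensor_on_def by (auto intro!: smooth_on_sum smooth_on_mult)

lemma normsq_eq_sum: "normsq g w
  = (\<lambda>y. \<Sum>b\<in>UNIV. \<Sum>c\<in>UNIV. ginv g y $ b $ c * (w y $ b * w y $ c))"
  by (simp add: normsq_def[abs_def] mult.assoc)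

lemma div1_eq_sum: "div1 g w
  = (\<lambda>y. \<Sum>b\<in>UNIV. \<Sum>c\<in>UNIV. ginv g y $ b $ c * cov1 g w b c y)"
  by (simp add: div1_def[abs_def])

lemma smooth_normsq: "smooth_vec_on U w \<Longrightarrow> smooth_on U (normsq g w)"
  unfolding normsq_eq_sum by (rule smooth_contract_ginv[OF smooth_tensor_on_product[OF U_open]])

lemma smooth_div1: "smooth_vec_on U w \<Longrightarrow> smooth_on U (div1 g w)"
  unfolding div1_eq_sum by (rule smooth_contract_ginv[OF smooth_tensor_on_cov1])

lemma pd_normsq: "x \<in> U \<Longrightarrow> smooth_vec_on U w \<Longrightarrow> pd a (normsq g w) x
   = contract (ginv_at x)
       (\<lambda>b c. cov1 g w a b x * w x $ c + w x $ b * cov1 g w a c x)"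
  unfolding normsq_eq_sum contract_def
  by (simp add: pd_contract_ginv smooth_tensor_on_product[OF U_open] cov2_tensor_product)

lemma pd_div1: "x \<in> U \<Longrightarrow> smooth_vec_on U w \<Longrightarrow> pd a (div1 g w) x
   = contract (ginv_at x)
       (\<lambda>b c. cov2 g (\<lambda>y p q. cov1 g w p q y) a b c x)"
  unfolding div1_eq_sum contract_def by (simp add: pd_contract_ginv smooth_tensor_on_cov1)

lemma normsq_eq_contract: "normsq g w x = contract (ginv_at x) (\<lambda>b c. w x $ b * w x $ c)"
  by (simp add: normsq_def contract_def mult.assoc)
lemma div1_eq_contract: "div1 g w x = contract (ginv_at x) (\<lambda>b c. cov1 g w b c x)"
  by (simp add: div1_def contract_def)

lemma contract_curv_vec: "x \<in> U
  \<Longrightarrow> (\<Sum>b\<in>UNIV. \<Sum>c\<in>UNIV. ginv g x $ b $ c * (w x v* curv c a x) $ b)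
   = - (\<Sum>b\<in>UNIV. \<Sum>c\<in>UNIV. ginv g x $ b $ c * (ricci g a b x * w x $ c))"
proof -
  assume x: "x \<in> U"
  let ?H = "ginv g x"
  have t: "(curv c a x ** ?H) $ l $ c = - (curv c a x ** ?H) $ c $ l" for c l
  proof -
    have "transpose (curv c a x ** ?H) $ c $ l = (- (curv c a x ** ?H)) $ c $ l"
        using curv_ginv_skew[OF x] by simp
    then show ?thesis by (simp add: transpose_def)
  qed
  have "(\<Sum>b\<in>UNIV. \<Sum>c\<in>UNIV. ?H $ b $ c * (w x v* curv c a x) $ b)
      = (\<Sum>b\<in>UNIV. \<Sum>c\<in>UNIV. \<Sum>l\<in>UNIV. w x $ l * curv c a x $ l $ b
            * ?H $ b $ c)"
    by (simp add: vector_matrix_mult_nth sum_distrib_left mult_ac)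
  also have "\<dots> =
      (\<Sum>l\<in>UNIV. \<Sum>c\<in>UNIV. \<Sum>b\<in>UNIV. w x $ l * curv c a x $ l $ b
        * ?H $ b $ c)"
    by (rule sum_swap_outer)
  also have "\<dots> = (\<Sum>l\<in>UNIV. w x $ l * (\<Sum>c\<in>UNIV. (curv c a x ** ?H) $ l $ c))"
    by (simp add: matrix_matrix_mult_def sum_distrib_left mult_ac)
  also have "\<dots> = - (\<Sum>l\<in>UNIV. w x $ l * (\<Sum>c\<in>UNIV. (curv c a x ** ?H) $ c $ l))"
    by (simp add: t sum_negf)
  also have "\<dots> = - (\<Sum>l\<in>UNIV. w x $ l * (\<Sum>b\<in>UNIV. ?H $ b $ l * ricci g b a x))"
  proof -
    have "(\<Sum>c\<in>UNIV. (curv c a x ** ?H) $ c $ l)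
        = (\<Sum>b\<in>UNIV. ?H $ b $ l * ricci g b a x)" for l
      by (simp add: matrix_matrix_mult_def ricci_eq_trace_curv[OF x] sum_distrib_left mult_ac)
          (rule sum.swap)
    then show ?thesis by simp
  qed
  also have "\<dots> = - (\<Sum>b\<in>UNIV. \<Sum>c\<in>UNIV. ?H $ b $ c * (ricci g a b x * w x $ c))"
  proof -
    have "(\<Sum>b\<in>UNIV. \<Sum>c\<in>UNIV. ?H $ b $ c * (ricci g a b x * w x $ c))
        = (\<Sum>c\<in>UNIV. \<Sum>b\<in>UNIV. ?H $ b $ c * (ricci g a b x * w x $ c))"
      by (rule sum.swap)
    then show ?thesis by (simp add: sum_distrib_left ricci_sym[OF x, of a] mult_ac)
  qed
  finally show ?thesis .
qed

lemma contract_ginv_g: "x \<in> U \<Longrightarrow> contract (ginv_at x) (\<lambda>b c. g x $ a $ b * v c) = v a"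
proof -
  assume x: "x \<in> U"
  have "contract (ginv_at x) (\<lambda>b c. g x $ a $ b * v c)
      = (\<Sum>c\<in>UNIV. (\<Sum>b\<in>UNIV. g x $ a $ b * ginv g x $ b $ c) * v c)"
    unfolding contract_def by (subst sum.swap) (simp add: sum_distrib_right sum_distrib_left mult_ac)
  also have "\<dots> = v a" by (simp add: sum_g_ginv[OF x] of_bool_def[symmetric])
  finally show ?thesis .
qed

lemma contracted_ricci_identity:
  assumes "x \<in> U" "smooth_vec_on U w"
  shows "contract (ginv_at x) (\<lambda>b c. cov2 g (\<lambda>y p q. cov1 g w p q y) c a b x)
      - contract (ginv_at x) (\<lambda>b c. cov2 g (\<lambda>y p q. cov1 g w p q y) a c b x)
    = contract (ginv_at x) (\<lambda>b c. ricci g a b x * w x $ c)"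
proof -
  have "contract (ginv_at x) (\<lambda>b c. cov2 g (\<lambda>y p q. cov1 g w p q y) c a b x)
      - contract (ginv_at x) (\<lambda>b c. cov2 g (\<lambda>y p q. cov1 g w p q y) a c b x)
    = - (\<Sum>b\<in>UNIV. \<Sum>c\<in>UNIV. ginv g x $ b $ c * (w x v* curv c a x) $ b)"
    unfolding contract_diff[symmetric] unfolding contract_def ricci_identity[OF assms]
    by (simp add: sum_negf)
  then show ?thesis unfolding contract_def by (simp add: contract_curv_vec[OF assms(1)])
qed

end

section \<open>The near-horizon equation\<close>

text \<open>Multiplied by \<open>2 G\<^sup>2\<close>, the left-hand side is \<open>2 G\<^sup>2 lam Ga a\<close> plus the contraction of a
  tensor \<open>P\<close>. After substituting \<open>K\<close>, \<open>DK\<close> and \<open>DDK\<close>, \<open>P\<close> differs from \<open>2 G\<^sup>2 E\<close> by a tensor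
  that is skew in its two indices and so contracts to zero against the symmetric \<open>h\<close>; the
  contraction of \<open>E\<close> is \<open>- lam Ga a\<close> by the contracted Bianchi identity \<open>bian\<close> and the
  commuted third derivatives \<open>comm\<close> of \<open>\<Gamma>\<close>.\<close>

lemma near_horizon_identity_algebraic:
  fixes h Hs DX :: "'n::finite \<Rightarrow> 'n \<Rightarrow> real" and X Ga :: "'n \<Rightarrow> real"
    and DDX HH :: "'n \<Rightarrow> 'n \<Rightarrow> 'n \<Rightarrow> real" and G lam :: real and a :: 'n
    and K :: "'n \<Rightarrow> real" and DK :: "'n \<Rightarrow> 'n \<Rightarrow> real"
        and DDK :: "'n \<Rightarrow> 'n \<Rightarrow> 'n \<Rightarrow> real"
  assumes h_sym: "\<And>b c. h b c = h c b" and Hs_sym: "\<And>b c. Hs b c = Hs c b"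
    and HH_sym: "\<And>i b c. HH i b c = HH i c b"
    and "G > 0"
    and bian: "contract h
        (\<lambda>b c. (1/2) * (DX c a * X b + X a * DX c b) - (1/2) * (DDX c a b + DDX c b a))
      = (1/2) * contract h
          (\<lambda>b c. (1/2) * (DX a b * X c + X b * DX a c) - (1/2) * (DDX a b c + DDX a c b))"
    and comm: "contract h (\<lambda>b c. HH c a b) = contract h (\<lambda>b c. HH a b c)
      + contract h (\<lambda>b c. ((1/2) * X a * X b - (1/2) * (DX a b + DX b a)) * Ga c) + lam * Ga a"
    and K_def: "\<And>i. K i = G * X i + Ga i"
    and DK_def: "\<And>i j. DK i j = G * DX i j + Ga i * X j + Hs i j"
    and DDK_def: "\<And>k i j. DDK k i j = Ga k * DX i j + G * DDX k i j + Hs k i * X j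
        + Ga i * DX k j + HH k i j"
  shows "(Ga a * ((contract h (\<lambda>b c. X b * X c) / 2 - contract h DX / 2 + lam)
          - contract h (\<lambda>b c. K b * K c) / G^2)
      + G * ((contract h (\<lambda>b c. DX a b * X c + X b * DX a c) / 2 - contract h (DDX a) / 2)
         - (contract h (\<lambda>b c. DK a b * K c + K b * DK a c) / G^2
            - 2 * contract h (\<lambda>b c. K b * K c) * Ga a / G^3)))
    + (1 / (2 * G)) * (contract h (\<lambda>b c. Hs a b * K c + Ga b * DK a c)
       - (K a + Ga a) / G * contract h (\<lambda>b c. K c * Ga b))
    - (contract h (\<lambda>b c. (DDK c a b + DDK c b a) / 2)
          - contract h (\<lambda>b c. K c * ((DK a b + DK b a) / 2)) / G)
    + (contract h (DDK a) + (K a - Ga a) / (2 * G) * contract h DK) = 0"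
    (is "?lhs = 0")
proof -
  define E where "E b c = G * ((1/2) * (DX c a * X b + X a * DX c b) - (1/2) * (DDX c a b + DDX c b a))
      - (G / 2) * ((1/2) * (DX a b * X c + X b * DX a c) - (1/2) * (DDX a b c + DDX a c b))
      - HH c a b + HH a b c + ((1/2) * X a * X b - (1/2) * (DX a b + DX b a)) * Ga c" for b c
  have contract_E: "contract h E = - lam * Ga a"
    using bian comm unfolding E_def by (simp only: contract_add contract_diff contract_scale)
  define P where "P b c = (G^2 * Ga a) * (X b * X c) - (G^2 * Ga a) * DX b c + (2 * Ga a) * (K b * K c)
     + G^3 * (DX a b * X c + X b * DX a c) - G^3 * DDX a b c - (2 * G) * (DK a b * K c + K b * DK a c)
     + G * (Hs a b * K c + Ga b * DK a c) - (K a + Ga a) * (K c * Ga b) - G^2 * (DDK c a b + DDK c b a)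
     + G * (K c * (DK a b + DK b a)) + (2 * G^2) * DDK a b c + (G * (K a - Ga a)) * DK b c" for b c
  have "contract h (\<lambda>b c. (DDK c a b + DDK c b a) / 2)
      = (1/2) * contract h (\<lambda>b c. DDK c a b + DDK c b a)"
    and "contract h (\<lambda>b c. K c * ((DK a b + DK b a) / 2))
        = (1/2) * contract h (\<lambda>b c. K c * (DK a b + DK b a))"
    using contract_scale[of h "1/2" "\<lambda>b c. DDK c a b + DDK c b a"]
      contract_scale[of h "1/2" "\<lambda>b c. K c * (DK a b + DK b a)"] by (simp_all add: mult_ac)
  then have lhs: "2 * G^2 * ?lhs = 2 * G^2 * lam * Ga a + contract h P"
    unfolding P_def using \<open>G > 0\<close>
    by (simp only: contract_add contract_diff contract_scale)
        (simp add: field_simps power2_eq_square power3_eq_cube)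
  have "(P b c - 2 * G^2 * E b c) + (P c b - 2 * G^2 * E c b) = 0" for b c
    unfolding P_def E_def K_def DK_def DDK_def
    by (simp add: Hs_sym[of c b] Hs_sym[of a c] Hs_sym[of a b] HH_sym[of b c a] HH_sym[of c b a]
          HH_sym[of a c b]
        algebra_simps power2_eq_square power3_eq_cube)
  then have "contract h (\<lambda>b c. P b c - 2 * G^2 * E b c) = 0"
    by (intro contract_skew h_sym)
  then have "contract h P = - 2 * G^2 * lam * Ga a"
    using contract_E by (simp add: contract_diff contract_scale)
  with lhs \<open>G > 0\<close> show ?thesis by simp
qed

locale near_horizon = riemannian_chart U g for U :: "(real^'n::finite) set" and g +
  fixes X :: "real^'n \<Rightarrow> real^'n" and Gam :: "real^'n \<Rightarrow> real" and lam :: real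
  assumes X_smooth: "\<forall>i. smooth_on U (\<lambda>x. X x $ i)"
    and Gam_smooth: "smooth_on U Gam"
    and Gam_pos: "\<forall>x\<in>U. Gam x > 0"
    and ricci_eq: "\<forall>x\<in>U. \<forall>a b. ricci g a b x
      = (1/2) * X x $ a * X x $ b - symcov g X a b x + lam * g x $ a $ b"
begin

definition grad_Gam :: "real^'n \<Rightarrow> real^'n" where "grad_Gam y = (\<chi> i. pd i Gam y)"

lemma grad_Gam_nth[simp]: "grad_Gam y $ i = pd i Gam y" by (simp add: grad_Gam_def)

lemma smooth_X: "smooth_vec_on U X" unfolding smooth_vec_on_def using X_smooth by simp
lemma smooth_pd_Gam: "smooth_on U (pd i Gam)" using smooth_on_pd[OF Gam_smooth] .
lemma smooth_grad_Gam: "smooth_vec_on U grad_Gam" unfolding smooth_vec_on_def using smooth_pd_Gam by simp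
lemma smooth_K: "smooth_vec_on U (Kf X Gam)"
  using Gam_smooth smooth_X smooth_pd_Gam U_open unfolding smooth_vec_on_def Kf_def
  by (auto intro!: smooth_on_add smooth_on_mult)

lemma cov1_K: "x \<in> U \<Longrightarrow> cov1 g (Kf X Gam) i j x = Gam x * cov1 g X i j x
  + pd i Gam x * X x $ j + cov1 g grad_Gam i j x"
proof -
  assume x: "x \<in> U"
  have "pd i (\<lambda>y. Kf X Gam y $ j) x = pd i (\<lambda>y. Gam y * X y $ j + pd j Gam y) x"
      by (simp add: Kf_def)
  also have "\<dots> = pd i Gam x * X x $ j + Gam x * pd i (\<lambda>y. X y $ j) x + pd i (pd j Gam) x"
    using smooth_on_differentiable[OF Gam_smooth x] smooth_vec_on_differentiable[OF smooth_X x]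
        smooth_on_differentiable[OF smooth_pd_Gam x]
    by (simp add: pd_add pd_mult differentiable_mult)
  finally have "pd i (\<lambda>y. Kf X Gam y $ j) x = pd i Gam x * X x $ j
      + Gam x * pd i (\<lambda>y. X y $ j) x + pd i (pd j Gam) x" .
  moreover have "pd i (\<lambda>y. grad_Gam y $ j) x = pd i (pd j Gam) x" by (simp add: grad_Gam_nth)
  ultimately show ?thesis unfolding cov1_def
    by (simp add: Kf_def ring_distribs sum.distrib sum_distrib_left mult_ac)
qed

lemma cov2_K: "x \<in> U \<Longrightarrow> cov2 g (\<lambda>y p q. cov1 g (Kf X Gam) p q y) k i j x
  = pd k Gam x * cov1 g X i j x + Gam x * cov2 g (\<lambda>y p q. cov1 g X p q y) k i j x
    + cov1 g grad_Gam k i x * X x $ j + pd i Gam x * cov1 g X k j x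
        + cov2 g (\<lambda>y p q. cov1 g grad_Gam p q y) k i j x"
proof -
  assume x: "x \<in> U"
  have "cov2 g (\<lambda>y p q. cov1 g (Kf X Gam) p q y) k i j x
     = cov2 g (\<lambda>y p q. (Gam y * cov1 g X p q y + grad_Gam y $ p * X y $ q)
           + cov1 g grad_Gam p q y) k i j x"
    by (rule cov2_cong[OF x]) (simp add: cov1_K)
  also have "\<dots> = cov2 g (\<lambda>y p q. Gam y * cov1 g X p q y + grad_Gam y $ p * X y $ q) k i j x
      + cov2 g (\<lambda>y p q. cov1 g grad_Gam p q y) k i j x"
    using smooth_tensor_on_cov1[OF smooth_X] smooth_tensor_on_cov1[OF smooth_grad_Gam] Gam_smooth
        smooth_X smooth_grad_Gam U_open
    by (intro cov2_add[OF x])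
        (auto simp: smooth_tensor_on_def smooth_vec_on_def intro!: smooth_on_add smooth_on_mult)
  also have "cov2 g (\<lambda>y p q. Gam y * cov1 g X p q y + grad_Gam y $ p * X y $ q) k i j x
      = cov2 g (\<lambda>y p q. Gam y * cov1 g X p q y) k i j x
          + cov2 g (\<lambda>y p q. grad_Gam y $ p * X y $ q) k i j x"
    using smooth_tensor_on_cov1[OF smooth_X] Gam_smooth smooth_X smooth_grad_Gam U_open
    by (intro cov2_add[OF x])
        (auto simp: smooth_tensor_on_def smooth_vec_on_def intro!: smooth_on_add smooth_on_mult)
  also have "cov2 g (\<lambda>y p q. Gam y * cov1 g X p q y) k i j x
      = pd k Gam x * cov1 g X i j x + Gam x * cov2 g (\<lambda>y p q. cov1 g X p q y) k i j x"
    by (rule cov2_mult_fun[OF x Gam_smooth smooth_tensor_on_cov1[OF smooth_X]])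
  also have "cov2 g (\<lambda>y p q. grad_Gam y $ p * X y $ q) k i j x
      = cov1 g grad_Gam k i x * X x $ j + grad_Gam x $ i * cov1 g X k j x"
    by (rule cov2_tensor_product[OF x smooth_grad_Gam smooth_X])
  finally show ?thesis by (simp add: add.assoc)
qed

lemma hessian_Gam_sym: "x \<in> U \<Longrightarrow> cov1 g grad_Gam i j x = cov1 g grad_Gam j i x"
proof -
  assume x: "x \<in> U"
  have "pd i (\<lambda>y. grad_Gam y $ j) x = pd j (\<lambda>y. grad_Gam y $ i) x"
    using smooth_on_pd_commute[OF U_open x Gam_smooth, of i j] by (simp add: grad_Gam_nth)
  then show ?thesis unfolding cov1_def by (simp add: chr_sym[OF x, of _ i j])
qed

lemma cov_hessian_Gam_sym: "x \<in> U
  \<Longrightarrow> cov2 g (\<lambda>y p q. cov1 g grad_Gam p q y) k i j x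
  = cov2 g (\<lambda>y p q. cov1 g grad_Gam p q y) k j i x"
proof -
  assume x: "x \<in> U"
  have "cov2 g (\<lambda>y p q. cov1 g grad_Gam p q y) k i j x
      = cov2 g (\<lambda>y p q. cov1 g grad_Gam q p y) k i j x"
    by (rule cov2_cong[OF x]) (simp add: hessian_Gam_sym)
  also have "\<dots> = cov2 g (\<lambda>y p q. cov1 g grad_Gam p q y) k j i x" by (rule cov2_transpose)
  finally show ?thesis .
qed

lemma cov_ricci_near_horizon: "x \<in> U \<Longrightarrow> cov2 g (\<lambda>y p q. ricci g p q y) c i j x
  = (1/2) * (cov1 g X c i x * X x $ j + X x $ i * cov1 g X c j x)
    - (1/2) * (cov2 g (\<lambda>y p q. cov1 g X p q y) c i j x
          + cov2 g (\<lambda>y p q. cov1 g X p q y) c j i x)"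
proof -
  assume x: "x \<in> U"
  let ?XX = "\<lambda>y p q. X y $ p * X y $ q"
  let ?S = "\<lambda>y p q. (cov1 g X p q y + cov1 g X q p y) / 2"
  let ?g = "\<lambda>y p q. g y $ p $ q"
  have s2XX: "smooth_tensor_on U ?XX" using smooth_X U_open
      unfolding smooth_tensor_on_def smooth_vec_on_def by (auto intro!: smooth_on_mult)
  have s2S: "smooth_tensor_on U ?S" using smooth_tensor_on_cov1[OF smooth_X] U_open
      unfolding smooth_tensor_on_def by (auto intro!: smooth_on_add smooth_on_mult smooth_on_divide)
  have s2g: "smooth_tensor_on U ?g" using smooth_g unfolding smooth_tensor_on_def by auto
  have "cov2 g (\<lambda>y p q. ricci g p q y) c i j x
      = cov2 g (\<lambda>y p q. ((1/2) * ?XX y p q + (-1) * ?S y p q) + lam * ?g y p q) c i j x"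
    by (rule cov2_cong[OF x]) (simp add: ricci_eq symcov_def field_simps)
  also have "\<dots> = cov2 g (\<lambda>y p q. (1/2) * ?XX y p q + (-1) * ?S y p q) c i j x
      + cov2 g (\<lambda>y p q. lam * ?g y p q) c i j x"
    by (intro cov2_add[OF x] smooth_tensor_on_add smooth_tensor_on_scale U_open s2XX s2S s2g)
  also have "cov2 g (\<lambda>y p q. (1/2) * ?XX y p q + (-1) * ?S y p q) c i j x
     = cov2 g (\<lambda>y p q. (1/2) * ?XX y p q) c i j x
         + cov2 g (\<lambda>y p q. (-1) * ?S y p q) c i j x"
    by (intro cov2_add[OF x] smooth_tensor_on_add smooth_tensor_on_scale U_open s2XX s2S s2g)
  also have "cov2 g (\<lambda>y p q. (1/2) * ?XX y p q) c i j x = (1/2) * cov2 g ?XX c i j x"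
    using cov2_mult_fun[OF x _ s2XX, of "\<lambda>_. 1/2"] U_open by (simp add: pd_const)
  also have "cov2 g (\<lambda>y p q. (-1) * ?S y p q) c i j x = (-1) * cov2 g ?S c i j x"
    using cov2_mult_fun[OF x _ s2S, of "\<lambda>_. -1"] U_open by (simp add: pd_const)
  also have "cov2 g (\<lambda>y p q. lam * ?g y p q) c i j x = lam * cov2 g ?g c i j x"
    using cov2_mult_fun[OF x _ s2g, of "\<lambda>_. lam"] U_open by (simp add: pd_const)
  also have "cov2 g ?XX c i j x = cov1 g X c i x * X x $ j + X x $ i * cov1 g X c j x"
    by (rule cov2_tensor_product[OF x smooth_X smooth_X])
  also have "cov2 g ?S c i j x
      = (cov2 g (\<lambda>y p q. cov1 g X p q y) c i j x
        + cov2 g (\<lambda>y p q. cov1 g X p q y) c j i x) / 2"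
    by (rule cov2_symmetrize[OF x smooth_tensor_on_cov1[OF smooth_X]])
  finally show ?thesis using cov2_g[OF x] by (simp add: field_simps)
qed

lemma smooth_Ff: "smooth_on U (Ff g X lam)"
proof -
  have "smooth_on U (\<lambda>y. normsq g X y / 2 - div1 g X y / 2 + lam)"
    using smooth_normsq[OF smooth_X] smooth_div1[OF smooth_X] U_open
    by (intro smooth_on_add smooth_on_diff smooth_on_divide smooth_on_const) auto
  then show ?thesis by (simp add: Ff_def[abs_def])
qed

lemma pd_Ff: "x \<in> U \<Longrightarrow> pd a (Ff g X lam) x
  = contract (ginv_at x) (\<lambda>b c. cov1 g X a b x * X x $ c + X x $ b * cov1 g X a c x) / 2
    - contract (ginv_at x) (\<lambda>b c. cov2 g (\<lambda>y p q. cov1 g X p q y) a b c x) / 2"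
  unfolding Ff_def[abs_def] pd_normsq[symmetric, OF _ smooth_X] pd_div1[symmetric, OF _ smooth_X]
  by (simp add: pd_add pd_diff pd_const pd_divide_const differentiable_diff differentiable_divide
      smooth_on_differentiable[OF smooth_normsq[OF smooth_X]]
      smooth_on_differentiable[OF smooth_div1[OF smooth_X]])

lemma pd_Af: "x \<in> U \<Longrightarrow> pd a (Af g X Gam lam) x =
  pd a Gam x * ((contract (ginv_at x) (\<lambda>b c. X x $ b * X x $ c) / 2
          - contract (ginv_at x) (\<lambda>b c. cov1 g X b c x) / 2 + lam)
      - contract (ginv_at x) (\<lambda>b c. Kf X Gam x $ b * Kf X Gam x $ c) / (Gam x)^2)
  + Gam x * ((contract (ginv_at x)
          (\<lambda>b c. cov1 g X a b x * X x $ c + X x $ b * cov1 g X a c x) / 2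
       - contract (ginv_at x) (\<lambda>b c. cov2 g (\<lambda>y p q. cov1 g X p q y) a b c x) / 2)
     - (contract (ginv_at x)
           (\<lambda>b c. cov1 g (Kf X Gam) a b x * Kf X Gam x $ c
           + Kf X Gam x $ b * cov1 g (Kf X Gam) a c x) / (Gam x)^2
        - 2 * contract (ginv_at x) (\<lambda>b c. Kf X Gam x $ b * Kf X Gam x $ c)
            * pd a Gam x / (Gam x)^3))"
proof -
  assume x: "x \<in> U"
  have G0: "Gam x \<noteq> 0" using Gam_pos x by auto
  have dG: "Gam differentiable (at x)" by (rule smooth_on_differentiable[OF Gam_smooth x])
  have dnK: "normsq g (Kf X Gam) differentiable (at x)"
    by (rule smooth_on_differentiable[OF smooth_normsq[OF smooth_K] x])
  have "smooth_on U (\<lambda>y. normsq g (Kf X Gam) y / (Gam y)^2)"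
    using smooth_normsq[OF smooth_K] Gam_smooth Gam_pos U_open
    by (intro smooth_on_divide smooth_on_mult) (auto simp: power2_eq_square)
  then have dQ: "(\<lambda>y. normsq g (Kf X Gam) y / (Gam y)^2) differentiable (at x)"
    using x by (rule smooth_on_differentiable)
  have "pd a (Af g X Gam lam) x = pd a Gam x * (Ff g X lam x - normsq g (Kf X Gam) x / (Gam x)^2)
      + Gam x * (pd a (Ff g X lam) x - pd a (\<lambda>y. normsq g (Kf X Gam) y / (Gam y)^2) x)"
    unfolding Af_def[abs_def] using dG dQ smooth_on_differentiable[OF smooth_Ff x]
    by (simp add: pd_mult pd_diff differentiable_diff)
  also have "pd a (\<lambda>y. normsq g (Kf X Gam) y / (Gam y)^2) x
     = pd a (normsq g (Kf X Gam)) x / (Gam x)^2 - 2 * normsq g (Kf X Gam) x * pd a Gam x / (Gam x)^3"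
    by (rule pd_divide_square[OF dnK dG G0])
  finally show ?thesis
    unfolding pd_Ff[OF x] pd_normsq[OF x smooth_K] by (simp add: Ff_def normsq_eq_contract div1_eq_contract)
qed

lemma raise_K_grad_Gam_eq_sum: "(\<lambda>y. \<Sum>b\<in>UNIV. raise g (Kf X Gam) y $ b * pd b Gam y)
   = (\<lambda>y. \<Sum>b\<in>UNIV. \<Sum>c\<in>UNIV. ginv g y $ b $ c
         * (grad_Gam y $ b * Kf X Gam y $ c))"
  by (simp add: raise_nth sum_distrib_right sum_distrib_left mult_ac)

lemma pd_K_grad_Gam: "x \<in> U
  \<Longrightarrow> pd a (\<lambda>y. \<Sum>b\<in>UNIV. raise g (Kf X Gam) y $ b * pd b Gam y) x
  = contract (ginv_at x)
      (\<lambda>b c. cov1 g grad_Gam a b x * Kf X Gam x $ c + pd b Gam x * cov1 g (Kf X Gam) a c x)"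
proof -
  assume x: "x \<in> U"
  have "pd a (\<lambda>y. \<Sum>b\<in>UNIV. \<Sum>c\<in>UNIV. ginv g y $ b $ c
        * (grad_Gam y $ b * Kf X Gam y $ c)) x
     = (\<Sum>b\<in>UNIV. \<Sum>c\<in>UNIV. ginv g x $ b $ c
           * cov2 g (\<lambda>y p q. grad_Gam y $ p * Kf X Gam y $ q) a b c x)"
    by (rule pd_contract_ginv[OF x smooth_tensor_on_product[OF U_open smooth_grad_Gam smooth_K]])
  then show ?thesis unfolding raise_K_grad_Gam_eq_sum contract_def
      cov2_tensor_product[OF x smooth_grad_Gam smooth_K] by simp
qed

lemma K_grad_Gam_eq_contract: "(\<Sum>b\<in>UNIV. raise g (Kf X Gam) x $ b * pd b Gam x)
  = contract (ginv_at x) (\<lambda>b c. Kf X Gam x $ c * pd b Gam x)"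
  unfolding contract_def by (simp add: raise_nth sum_distrib_right sum_distrib_left mult_ac)

lemma contract_cov2_symcov_K: "x \<in> U
  \<Longrightarrow> (\<Sum>b\<in>UNIV. \<Sum>c\<in>UNIV. ginv g x $ b $ c
    * cov2 g (\<lambda>y p q. symcov g (Kf X Gam) p q y) c a b x)
  = contract (ginv_at x)
      (\<lambda>b c. (cov2 g (\<lambda>y p q. cov1 g (Kf X Gam) p q y) c a b x
          + cov2 g (\<lambda>y p q. cov1 g (Kf X Gam) p q y) c b a x) / 2)"
  unfolding contract_def symcov_def by (simp add: cov2_symmetrize smooth_tensor_on_cov1 smooth_K)

lemma K_symcov_K_eq_contract: "(\<Sum>b\<in>UNIV. raise g (Kf X Gam) x $ b * symcov g (Kf X Gam) a b x)
  = contract (ginv_at x)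
      (\<lambda>b c. Kf X Gam x $ c * ((cov1 g (Kf X Gam) a b x + cov1 g (Kf X Gam) b a x) / 2))"
  unfolding contract_def symcov_def
  by (simp add: raise_nth sum_distrib_right sum_distrib_left sum_divide_distrib mult_ac)

lemma contracted_bianchi_near_horizon: "x \<in> U \<Longrightarrow>
   contract (ginv_at x) (\<lambda>b c. (1/2) * (cov1 g X c a x * X x $ b + X x $ a * cov1 g X c b x)
     - (1/2) * (cov2 g (\<lambda>y p q. cov1 g X p q y) c a b x
           + cov2 g (\<lambda>y p q. cov1 g X p q y) c b a x))
   = (1/2) * contract (ginv_at x)
       (\<lambda>b c. (1/2) * (cov1 g X a b x * X x $ c + X x $ b * cov1 g X a c x)
     - (1/2) * (cov2 g (\<lambda>y p q. cov1 g X p q y) a b c x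
           + cov2 g (\<lambda>y p q. cov1 g X p q y) a c b x))"
  using contracted_bianchi[of x a] unfolding contract_def by (simp add: cov_ricci_near_horizon)

lemma contracted_ricci_identity_hessian: "x \<in> U \<Longrightarrow>
  contract (ginv_at x) (\<lambda>b c. cov2 g (\<lambda>y p q. cov1 g grad_Gam p q y) c a b x)
  = contract (ginv_at x) (\<lambda>b c. cov2 g (\<lambda>y p q. cov1 g grad_Gam p q y) a b c x)
    + contract (ginv_at x)
        (\<lambda>b c. ((1/2) * X x $ a * X x $ b - (1/2) * (cov1 g X a b x + cov1 g X b a x))
          * pd c Gam x)
    + lam * pd a Gam x"
proof -
  assume x: "x \<in> U"
  have "ricci g a b x * pd c Gam x
      = ((1/2) * X x $ a * X x $ b - (1/2) * (cov1 g X a b x + cov1 g X b a x)) * pd c Gam x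
        + lam * (g x $ a $ b * pd c Gam x)" for b c
  proof -
    have "ricci g a b x = (1/2) * X x $ a * X x $ b - (1/2) * (cov1 g X a b x + cov1 g X b a x)
        + lam * g x $ a $ b"
      using ricci_eq x by (simp add: symcov_def)
    then show ?thesis by (simp only:) (simp add: algebra_simps)
  qed
  then have "contract (ginv_at x) (\<lambda>b c. ricci g a b x * grad_Gam x $ c)
      = contract (ginv_at x)
          (\<lambda>b c. ((1/2) * X x $ a * X x $ b - (1/2) * (cov1 g X a b x + cov1 g X b a x))
            * pd c Gam x)
        + lam * pd a Gam x"
    by (simp add: contract_add contract_scale contract_ginv_g[OF x])
  moreover have "contract (ginv_at x) (\<lambda>b c. cov2 g (\<lambda>y p q. cov1 g grad_Gam p q y) a c b x)
      = contract (ginv_at x) (\<lambda>b c. cov2 g (\<lambda>y p q. cov1 g grad_Gam p q y) a b c x)"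
    unfolding contract_def by (simp add: cov_hessian_Gam_sym[OF x, of a _ _])
  ultimately show ?thesis
    using contracted_ricci_identity[OF x smooth_grad_Gam, of a] by simp
qed

lemma near_horizon_identity: "x \<in> U \<Longrightarrow>
    pd a (Af g X Gam lam) x
    + (1 / (2 * Gam x)) *
        (pd a (\<lambda>y. \<Sum>b\<in>UNIV. raise g (Kf X Gam) y $ b * pd b Gam y) x
         - (Kf X Gam x $ a + pd a Gam x) / Gam x
             * (\<Sum>b\<in>UNIV. raise g (Kf X Gam) x $ b * pd b Gam x))
    - ((\<Sum>b\<in>UNIV. \<Sum>c\<in>UNIV. ginv g x $ b $ c *
          cov2 g (\<lambda>y p q. symcov g (Kf X Gam) p q y) c a b x)
       - (\<Sum>b\<in>UNIV. raise g (Kf X Gam) x $ b * symcov g (Kf X Gam) a b x) / Gam x)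
    + (pd a (div1 g (Kf X Gam)) x
       + (Kf X Gam x $ a - pd a Gam x) / (2 * Gam x) * div1 g (Kf X Gam) x)
    = 0"
proof -
  assume x: "x \<in> U"
  show ?thesis
    unfolding pd_K_grad_Gam[OF x]
    unfolding pd_Af[OF x] K_grad_Gam_eq_contract contract_cov2_symcov_K[OF x]
      K_symcov_K_eq_contract pd_div1[OF x smooth_K] div1_eq_contract
    by (rule near_horizon_identity_algebraic[where h = "ginv_at x"
            and Hs = "\<lambda>i j. cov1 g grad_Gam i j x"
        and DX = "\<lambda>i j. cov1 g X i j x" and X = "\<lambda>i. X x $ i"
            and Ga = "\<lambda>i. pd i Gam x"
        and DDX = "\<lambda>k i j. cov2 g (\<lambda>y p q. cov1 g X p q y) k i j x"
        and HH = "\<lambda>k i j. cov2 g (\<lambda>y p q. cov1 g grad_Gam p q y) k i j x" and G = "Gam x"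
        and K = "\<lambda>i. Kf X Gam x $ i" and DK = "\<lambda>i j. cov1 g (Kf X Gam) i j x"
        and DDK = "\<lambda>k i j. cov2 g (\<lambda>y p q. cov1 g (Kf X Gam) p q y) k i j x",
        OF ginv_sym[OF x] hessian_Gam_sym[OF x] cov_hessian_Gam_sym[OF x] Gam_pos[rule_format, OF x]
        contracted_bianchi_near_horizon[OF x] contracted_ricci_identity_hessian[OF x]])
      (simp_all add: Kf_def cov1_K[OF x] cov2_K[OF x])
qed

end

theorem mainTheorem8:
  fixes U :: "(real^'n::finite) set"
    and g :: "real^'n \<Rightarrow> real^'n^'n"
    and X :: "real^'n \<Rightarrow> real^'n"
    and Gam :: "real^'n \<Rightarrow> real"
    and lam :: real
  assumes U_open: "open U"
    and g_sym: "\<forall>x\<in>U. \<forall>i j. g x $ i $ j = g x $ j $ i"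
    and g_pos: "\<forall>x\<in>U. \<forall>v. v \<noteq> 0 \<longrightarrow> v \<bullet> (g x *v v) > 0"
    and g_smooth: "\<forall>i j. smooth_on U (\<lambda>x. g x $ i $ j)"
    and X_smooth: "\<forall>i. smooth_on U (\<lambda>x. X x $ i)"
    and Gam_smooth: "smooth_on U Gam"
    and Gam_pos: "\<forall>x\<in>U. Gam x > 0"
    and soliton: "\<forall>x\<in>U. \<forall>a b. ricci g a b x
                    = (1/2) * X x $ a * X x $ b - symcov g X a b x + lam * g x $ a $ b"
  shows "\<forall>x\<in>U. \<forall>a.
    pd a (Af g X Gam lam) x
    + (1 / (2 * Gam x)) *
        (pd a (\<lambda>y. \<Sum>b\<in>UNIV. raise g (Kf X Gam) y $ b * pd b Gam y) x
         - (Kf X Gam x $ a + pd a Gam x) / Gam x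
             * (\<Sum>b\<in>UNIV. raise g (Kf X Gam) x $ b * pd b Gam x))
    - ((\<Sum>b\<in>UNIV. \<Sum>c\<in>UNIV. ginv g x $ b $ c *
          cov2 g (\<lambda>y p q. symcov g (Kf X Gam) p q y) c a b x)
       - (\<Sum>b\<in>UNIV. raise g (Kf X Gam) x $ b * symcov g (Kf X Gam) a b x) / Gam x)
    + (pd a (div1 g (Kf X Gam)) x
       + (Kf X Gam x $ a - pd a Gam x) / (2 * Gam x) * div1 g (Kf X Gam) x)
    = 0"
proof -
  interpret near_horizon U g X Gam lam
    using U_open g_sym g_pos g_smooth X_smooth Gam_smooth Gam_pos soliton by unfold_locales
  show ?thesis using near_horizon_identity by blast
qed

end
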